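(* Let $G$ be a group and $\kappa\le|G|$ an infinite cardinal. The following are equivalent: (1) the ball structure $\mathcal E_{[G]^{<\kappa}}$ has a linearly ordered base; (2) the bornology $[G]^{<\kappa}$ of the ballean $(G,\mathcal E_{[G]^{<\kappa}})$ has a linearly ordered base; (3) the ballean $(G,\mathcal E_{[G]^{<\kappa}})$ has bounded growth; (4) $|G|=\kappa$ and $\kappa$ is a regular cardinal. If $\kappa$ is regular or the group $G$ is solvable, then (1)–(4) are also equivalent to: (5) the ballean $(G,\mathcal E_{[G]^{<\kappa}})$ is normal.
   Context: A ballean is a pair $(X,\mathcal E_X)$ where $X$ is a set and $\mathcal E_X$ is a family of subsets of $X\times X$ (entourages) such that: each $E\in\mathcal E_X$ contains the diagonal; for any $E,F\in\mathcal E_X$ there is $D\in\mathcal E_X$ with $E\circ F^{-1}\subset D$; and $\bigcup\mathcal E_X=X\times X$. For $E\subset X\times X$, $x\in X$, $A\subset X$: $E[x]=\{y:(x,y)\in E\}$, $E[A]=\bigcup_{a\in A}E[a]$. $B\subset X$ is bounded if $B\subset E[x]$ for some $E\in\mathcal E_X$, $x\in X$; $\mathcal B_X$ is the family of bounded sets. Sets $A,B$ are asymptotically disjoint if $E[A]\cap E[B]\in\mathcal B_X$ for all $E\in\mathcal E_X$; $U$ is an asymptotic neighborhood of $A$ if $E[A]\setminus U\in\mathcal B_X$ for all $E$; $X$ is normal if any two asymptotically disjoint sets have disjoint asymptotic neighborhoods. $X$ has bounded growth if there is $\Gamma\subset X\times X$ with $\Gamma[B]$ bounded for all bounded $B$,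 and for each $E\in\mathcal E_X$ a bounded $B$ with $E[x]\subset\Gamma[x]$ for all $x\in X\setminus B$. A family of sets has a linearly ordered base if it has a subfamily linearly ordered by inclusion such that each member of the family is contained in some member of the subfamily. For a group $G$, $[G]^{<\kappa}$ is the family of subsets of $G$ of cardinality $<\kappa$, and $\mathcal E_{[G]^{<\kappa}}$ is the ball structure on $G$ consisting of the entourages $E_I=\{(x,y)\in G\times G:y\in\{x\}\cup Ix\}$, $I\in[G]^{<\kappa}$; the bounded sets of this ballean are exactly the members of $[G]^{<\kappa}$. *)

theory Defs
  imports "HOL-Algebra.Solvable_Groups"
begin

unbundle cardinal_syntax

definition bounded_in :: "'a set \<Rightarrow> ('a \<times> 'a) set set \<Rightarrow> 'a set \<Rightarrow> bool" where
  "bounded_in X \<E> B \<longleftrightarrow> (\<exists>E\<in>\<E>. \<exists>x\<in>X. B \<subseteq> E `` {x})"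

definition bornology :: "'a set \<Rightarrow> ('a \<times> 'a) set set \<Rightarrow> 'a set set" where
  "bornology X \<E> = {B. bounded_in X \<E> B}"

definition asymp_disjoint :: "'a set \<Rightarrow> ('a \<times> 'a) set set \<Rightarrow> 'a set \<Rightarrow> 'a set \<Rightarrow> bool" where
  "asymp_disjoint X \<E> A B \<longleftrightarrow> (\<forall>E\<in>\<E>. bounded_in X \<E> (E `` A \<inter> E `` B))"

definition asymp_nbhd :: "'a set \<Rightarrow> ('a \<times> 'a) set set \<Rightarrow> 'a set \<Rightarrow> 'a set \<Rightarrow> bool" where
  "asymp_nbhd X \<E> U A \<longleftrightarrow> (\<forall>E\<in>\<E>. bounded_in X \<E> (E `` A - U))"

definition normal_ballean :: "'a set \<Rightarrow> ('a \<times> 'a) set set \<Rightarrow> bool" where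
  "normal_ballean X \<E> \<longleftrightarrow>
     (\<forall>A B. A \<subseteq> X \<longrightarrow> B \<subseteq> X \<longrightarrow> asymp_disjoint X \<E> A B \<longrightarrow>
        (\<exists>U V. U \<subseteq> X \<and> V \<subseteq> X \<and> asymp_nbhd X \<E> U A \<and> asymp_nbhd X \<E> V B \<and> U \<inter> V = {}))"

definition bounded_growth :: "'a set \<Rightarrow> ('a \<times> 'a) set set \<Rightarrow> bool" where
  "bounded_growth X \<E> \<longleftrightarrow>
     (\<exists>\<Gamma>. \<Gamma> \<subseteq> X \<times> X \<and>
        (\<forall>B. bounded_in X \<E> B \<longrightarrow> bounded_in X \<E> (\<Gamma> `` B)) \<and>
        (\<forall>E\<in>\<E>. \<exists>B. bounded_in X \<E> B \<and> (\<forall>x\<in>X - B. E `` {x} \<subseteq> \<Gamma> `` {x})))"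

definition lin_ordered_base :: "'c set set \<Rightarrow> bool" where
  "lin_ordered_base \<F> \<longleftrightarrow>
     (\<exists>\<L> \<subseteq> \<F>. (\<forall>A\<in>\<L>. \<forall>B\<in>\<L>. A \<subseteq> B \<or> B \<subseteq> A) \<and> (\<forall>A\<in>\<F>. \<exists>B\<in>\<L>. A \<subseteq> B))"

definition small_subsets :: "('a, 'm) monoid_scheme \<Rightarrow> 'b rel \<Rightarrow> 'a set set" where
  "small_subsets G \<kappa> = {I. I \<subseteq> carrier G \<and> |I| <o \<kappa>}"

definition ent :: "('a, 'm) monoid_scheme \<Rightarrow> 'a set \<Rightarrow> ('a \<times> 'a) set" where
  "ent G I = {(x, y). x \<in> carrier G \<and> y \<in> carrier G \<and> (y = x \<or> (\<exists>i\<in>I. y = i \<otimes>\<^bsub>G\<^esub> x))}"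

definition ball_structure :: "('a, 'm) monoid_scheme \<Rightarrow> 'b rel \<Rightarrow> ('a \<times> 'a) set set" where
  "ball_structure G \<kappa> = ent G ` small_subsets G \<kappa>"

end

(*
  If |G| = kappa and kappa is regular, the initial segments of an enumeration of G of type
  kappa form a chain of small sets containing every small set: it is a linearly ordered base
  of the bornology, it gives the growth entourage moving x by the initial segment ending at x,
  and separating two asymptotically disjoint sets along it shows normality.

  Conversely, bounded growth and normality each produce a "square split" W of G x G: every
  small set of rows lies in W up to a small set, and every small set of columns misses W up
  to a small set.  This forces |G| = kappa with kappa regular.  If |G| > kappa, a column
  outside the exceptions of kappa many rows meets W in kappa points.  If kappa is singular,
  G is covered by fewer than kappa small sets of rows, and one column per set, avoiding its
  exceptions, gives fewer than kappa columns meeting W in |G| points.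

  For bounded growth, (c, r) is in W when r c lies in Gamma[c].  For normality, two
  transfinite recursions of length |G| produce maps k, h and an injective grid
  z(c, r) in k(r) A and h(c) B, where every quotient a b^-1 with a in A, b in B has at most
  three representations, so that A and B are asymptotically disjoint; then (c, r) is in W
  when z(c, r) lies in the given neighbourhood of A.
*)

theory Submission
  imports Defs
begin

lemma finite_ordLess_infinite_Field:
  assumes "Card_order r" and "\<not> finite (Field r)" and "finite A"
  shows "|A| <o r"
  using assms by (intro finite_ordLess_infinite)
    (auto simp: card_of_Well_order card_order_on_well_order_on Field_card_of card_of_well_order_on)

lemma card_of_image_ordLess: "|A| <o r \<Longrightarrow> |f ` A| <o r"
  by (rule ordLeq_ordLess_trans[OF card_of_image])

lemma card_of_subset_ordLess: "A \<subseteq> B \<Longrightarrow> |B| <o r \<Longrightarrow> |A| <o r"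
  by (rule ordLeq_ordLess_trans[OF card_of_mono1])

lemma card_of_inj_on_ordLess: "inj_on f A \<Longrightarrow> f ` A \<subseteq> B \<Longrightarrow> |B| <o r \<Longrightarrow> |A| <o r"
  by (metis card_of_ordLeq ordLeq_ordLess_trans)

lemma card_of_Times_ordLess_infinite_Field:
  assumes r: "Card_order r" and inf: "\<not> finite (Field r)"
    and A: "|A| <o r" and B: "|B| <o r"
  shows "|A \<times> B| <o r"
proof (cases "finite (A \<times> B)")
  case True
  then show ?thesis by (rule finite_ordLess_infinite_Field[OF r inf])
next
  case False
  then have ne: "A \<noteq> {}" "B \<noteq> {}" by auto
  from ordLeq_total[OF card_of_Well_order card_of_Well_order]
  consider "|A| \<le>o |B|" | "|B| \<le>o |A|" by blast
  then show ?thesis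
  proof cases
    case 1
    with False have "\<not> finite B" using card_of_ordLeq_finite by blast
    then have "|A \<times> B| =o |B|" using card_of_Times_infinite[OF _ ne(1) 1] by blast
    then show ?thesis using B ordIso_ordLess_trans by blast
  next
    case 2
    with False have "\<not> finite A" using card_of_ordLeq_finite by blast
    then have "|A \<times> B| =o |A|" using card_of_Times_infinite[OF _ ne(2) 2] by blast
    then show ?thesis using A ordIso_ordLess_trans by blast
  qed
qed

section \<open>Transfinite choice avoiding few values\<close>

abbreviation before :: "'i set \<Rightarrow> 'i \<Rightarrow> 'i set"
  where "before D v \<equiv> underS |D| v"

lemma wf_greedy_choice:
  assumes wf: "wf R"
    and local: "\<And>f g v. P v \<Longrightarrow> (\<And>u. (u, v) \<in> R \<Longrightarrow> f u = g u) \<Longrightarrow> Good f v = Good g v"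
    and possible: "\<And>f v. P v \<Longrightarrow> \<exists>x\<in>S. Good f v x"
  shows "\<exists>f. \<forall>v. P v \<longrightarrow> f v \<in> S \<and> Good f v (f v)"
proof -
  define f where "f = wfrec R (\<lambda>f v. SOME x. x \<in> S \<and> Good f v x)"
  have "f v \<in> S \<and> Good f v (f v)" if "P v" for v
  proof -
    have "f v = (SOME x. x \<in> S \<and> Good (cut f R v) v x)"
      unfolding f_def by (rule wfrec[OF wf])
    also have "Good (cut f R v) v = Good f v"
      by (rule local[OF that]) (simp add: cut_apply)
    finally have fv: "f v = (SOME x. x \<in> S \<and> Good f v x)" .
    have "\<exists>x. x \<in> S \<and> Good f v x" using possible[OF that] by blast
    then show ?thesis unfolding fv by (rule someI_ex)
  qed
  then show ?thesis by blast
qed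

lemma card_of_greedy_choice:
  assumes local: "\<And>f g v. v \<in> D \<Longrightarrow> (\<And>u. u \<in> before D v \<Longrightarrow> f u = g u) \<Longrightarrow> F f v = F g v"
    and small: "\<And>f v. v \<in> D \<Longrightarrow> |F f v| <o |S|"
  obtains f where "\<And>v. v \<in> D \<Longrightarrow> f v \<in> S - F f v"
proof -
  have wf: "wf ( |D| - Id)"
    using card_of_Well_order[of D] unfolding well_order_on_def by blast
  have local': "(\<lambda>x. x \<notin> F f v) = (\<lambda>x. x \<notin> F g v)"
    if "v \<in> D" and "\<And>u. (u, v) \<in> |D| - Id \<Longrightarrow> f u = g u" for f g v
    using that by (subst local) (auto simp: underS_def)
  have possible: "\<exists>x\<in>S. x \<notin> F f v" if "v \<in> D" for f v
  proof (rule ccontr)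
    assume "\<not> ?thesis"
    then have "S \<subseteq> F f v" by blast
    then have "|S| <o |S|" by (rule ordLeq_ordLess_trans[OF card_of_mono1 small[OF that]])
    then show False by (simp add: ordLess_irreflexive)
  qed
  have "\<exists>f. \<forall>v. v \<in> D \<longrightarrow> f v \<in> S \<and> f v \<notin> F f v"
    by (rule wf_greedy_choice[OF wf]) (fact local' possible)+
  then obtain f where f: "\<forall>v. v \<in> D \<longrightarrow> f v \<in> S \<and> f v \<notin> F f v" ..
  show ?thesis by (rule that[of f]) (use f in blast)
qed

lemma wo_rel_card_of: "wo_rel |A|"
  by (simp add: wo_rel_def card_of_Well_order)

lemma before_total:
  assumes "u \<in> D" and "v \<in> D" and "u \<noteq> v"
  shows "u \<in> before D v \<or> v \<in> before D u"
proof -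
  have "(u, v) \<in> |D| \<or> (v, u) \<in> |D|"
    using wo_rel.TOTALS[OF wo_rel_card_of[of D]] assms(1,2) by (simp add: Field_card_of)
  then show ?thesis using assms(3) by (auto simp: underS_def)
qed

lemma before_trans:
  assumes uv: "u \<in> before D v" and vw: "v \<in> before D w"
  shows "u \<in> before D w"
proof -
  have uv': "(u, v) \<in> |D|" and vw': "(v, w) \<in> |D|" and "v \<noteq> w"
    using uv vw by (auto simp: underS_def)
  have "(u, w) \<in> |D|"
    using wo_rel.TRANS[OF wo_rel_card_of[of D]] uv' vw' unfolding trans_def by blast
  moreover have "u \<noteq> w"
  proof
    assume "u = w"
    then have "v = w"
      using wo_rel.ANTISYM[OF wo_rel_card_of[of D]] uv' vw' unfolding antisym_def by blast
    then show False using \<open>v \<noteq> w\<close> by contradiction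
  qed
  ultimately show ?thesis by (simp add: underS_def)
qed

lemma before_asym: "u \<in> before D v \<Longrightarrow> v \<notin> before D u"
  using before_trans[of u D v u] by (auto simp: underS_def)

lemma before_subset: "before D v \<subseteq> D"
  using Order_Relation.underS_Field[of "|D|" v] by (simp add: Field_card_of)

lemma card_of_before:
  assumes "v \<in> D"
  shows "|before D v| <o |D|"
  using card_of_underS[OF card_of_Card_order, of v D] assms by (simp add: Field_card_of)

lemma inj_on_if_distinct_from_before:
  assumes "\<And>u v. v \<in> D \<Longrightarrow> u \<in> before D v \<Longrightarrow> \<phi> u \<noteq> \<phi> v"
  shows "inj_on \<phi> D"
proof (rule inj_onI, rule ccontr)
  fix u v assume "u \<in> D" "v \<in> D" "\<phi> u = \<phi> v" "u \<noteq> v"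
  then show False using before_total[of u D v] assms by metis
qed

section \<open>Chains, covers and square splits\<close>

lemma small_cover_if_not_regularCard:
  assumes co: "Card_order \<kappa>" and eq: "|X| =o \<kappa>" and nreg: "\<not> regularCard \<kappa>"
  obtains K I where "K \<subseteq> Field \<kappa>" and "|K| <o \<kappa>" and "\<And>a. a \<in> K \<Longrightarrow> I a \<subseteq> X \<and> |I a| <o \<kappa>"
    and "X \<subseteq> (\<Union>a\<in>K. I a)"
proof -
  obtain K where K: "K \<subseteq> Field \<kappa>" "cofinal K \<kappa>" "\<not> |K| =o \<kappa>"
    using nreg unfolding regularCard_def by blast
  have "|K| \<le>o \<kappa>"
    using ordLeq_ordIso_trans[OF card_of_mono1[OF K(1)] card_of_Field_ordIso[OF co]] .
  with K(3) have small: "|K| <o \<kappa>" using ordLeq_iff_ordLess_or_ordIso by blast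
  have "|Field \<kappa>| =o |X|"
    using ordIso_transitive[OF card_of_Field_ordIso[OF co] ordIso_symmetric[OF eq]] .
  then obtain g where g: "bij_betw g (Field \<kappa>) X" using card_of_ordIso by blast
  show ?thesis
  proof (rule that[of K "\<lambda>a. g ` underS \<kappa> a"])
    show "g ` underS \<kappa> a \<subseteq> X \<and> |g ` underS \<kappa> a| <o \<kappa>" if "a \<in> K" for a
    proof
      show "g ` underS \<kappa> a \<subseteq> X"
        using g Order_Relation.underS_Field[of \<kappa> a] by (auto simp: bij_betw_def)
      have "|underS \<kappa> a| <o \<kappa>" using card_of_underS[OF co] K(1) that by blast
      then show "|g ` underS \<kappa> a| <o \<kappa>" using ordLeq_ordLess_trans[OF card_of_image] by blast
    qed
    show "X \<subseteq> (\<Union>a\<in>K. g ` underS \<kappa> a)"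
    proof
      fix x assume "x \<in> X"
      then obtain b where b: "b \<in> Field \<kappa>" "x = g b" using g by (auto simp: bij_betw_def)
      then obtain a where "a \<in> K" "b \<noteq> a" "(b, a) \<in> \<kappa>" using K(2) unfolding cofinal_def by blast
      then show "x \<in> (\<Union>a\<in>K. g ` underS \<kappa> a)" using b(2) by (auto simp: underS_def)
    qed
  qed (use K(1) small in auto)
qed

lemma card_of_under_ordLess:
  assumes co: "Card_order \<kappa>" and inf: "\<not> finite (Field \<kappa>)" and a: "a \<in> Field \<kappa>"
  shows "|under \<kappa> a| <o \<kappa>"
proof -
  have "under \<kappa> a = underS \<kappa> a \<union> {a}"
    using co a by (intro Refl_under_underS) (simp_all add: card_order_on_def well_order_on_def
      linear_order_on_def partial_order_on_def preorder_on_def)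
  moreover have "|underS \<kappa> a| <o \<kappa>" by (rule card_of_underS[OF co a])
  moreover have "|{a}| <o \<kappa>" by (rule finite_ordLess_infinite_Field[OF co inf]) simp
  ultimately show ?thesis using card_of_Un_ordLess_infinite_Field[OF inf co] by metis
qed

text \<open>The initial segments of an enumeration of \<open>X\<close> of type \<open>\<kappa>\<close>; \<open>s x\<close> is the
  stage at which \<open>x\<close> is enumerated.\<close>

lemma regularCard_chain_cover:
  assumes co: "Card_order \<kappa>" and inf: "\<not> finite (Field \<kappa>)"
    and eq: "|X| =o \<kappa>" and reg: "regularCard \<kappa>"
  obtains C s where "\<And>a. a \<in> Field \<kappa> \<Longrightarrow> C a \<subseteq> X \<and> |C a| <o \<kappa>"
    and "\<And>a b. a \<in> Field \<kappa> \<Longrightarrow> b \<in> Field \<kappa> \<Longrightarrow> C a \<subseteq> C b \<or> C b \<subseteq> C a"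
    and "\<And>S. S \<subseteq> X \<Longrightarrow> |S| <o \<kappa> \<Longrightarrow> \<exists>a\<in>Field \<kappa>. S \<subseteq> C a"
    and "\<And>x. x \<in> X \<Longrightarrow> s x \<in> Field \<kappa> \<and> x \<in> C (s x)"
    and "\<And>x b. b \<in> Field \<kappa> \<Longrightarrow> x \<in> C b \<Longrightarrow> C (s x) \<subseteq> C b"
proof -
  have wo: "wo_rel \<kappa>" using co by (simp add: card_order_on_well_order_on wo_rel_def)
  have "|Field \<kappa>| =o |X|"
    using ordIso_transitive[OF card_of_Field_ordIso[OF co] ordIso_symmetric[OF eq]] .
  then obtain g where g: "bij_betw g (Field \<kappa>) X" using card_of_ordIso by blast
  define C where "C a = g ` under \<kappa> a" for a
  define s where "s = inv_into (Field \<kappa>) g"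
  have incr: "C a \<subseteq> C b" if "(a, b) \<in> \<kappa>" for a b
    unfolding C_def using under_incr[OF wo_rel.TRANS[OF wo] that] by (rule image_mono)
  have s: "s x \<in> Field \<kappa>" "g (s x) = x" if "x \<in> X" for x
    using g that unfolding s_def by (auto simp: bij_betw_def inv_into_into f_inv_into_f)
  have stage: "s x \<in> Field \<kappa> \<and> x \<in> C (s x)" if "x \<in> X" for x
  proof -
    have "s x \<in> under \<kappa> (s x)" using wo_rel.REFL[OF wo] s[OF that] by (auto simp: under_def refl_on_def)
    then have "g (s x) \<in> C (s x)" unfolding C_def by (rule imageI)
    then show ?thesis using s[OF that] by simp
  qed
  show ?thesis
  proof (rule that[of C s])
    show "C a \<subseteq> X \<and> |C a| <o \<kappa>" if "a \<in> Field \<kappa>" for a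
      using g under_Field[of \<kappa> a] card_of_image_ordLess[OF card_of_under_ordLess[OF co inf that]]
      by (auto simp: C_def bij_betw_def)
    show "C a \<subseteq> C b \<or> C b \<subseteq> C a" if "a \<in> Field \<kappa>" "b \<in> Field \<kappa>" for a b
      using wo_rel.TOTALS[OF wo] that incr by blast
    show "s x \<in> Field \<kappa> \<and> x \<in> C (s x)" if "x \<in> X" for x by (rule stage[OF that])
    show "C (s x) \<subseteq> C b" if "x \<in> C b" for x b
    proof -
      obtain a where a: "a \<in> under \<kappa> b" "x = g a" using \<open>x \<in> C b\<close> by (auto simp: C_def)
      then have "a \<in> Field \<kappa>" using under_Field by fast
      then have "s x = a" using a(2) g unfolding s_def by (simp add: bij_betw_def)
      then show ?thesis using a(1) incr by (simp add: under_def)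
    qed
    show "\<exists>a\<in>Field \<kappa>. S \<subseteq> C a" if S: "S \<subseteq> X" "|S| <o \<kappa>" for S
    proof (rule regularCard_UNION[OF co reg _ _ S(2)])
      show "relChain \<kappa> C" unfolding relChain_def using incr by blast
      show "S \<subseteq> (\<Union>i\<in>Field \<kappa>. C i)"
      proof
        fix x assume "x \<in> S"
        then have "x \<in> C (s x)" "s x \<in> Field \<kappa>" using S(1) stage by auto
        then show "x \<in> (\<Union>i\<in>Field \<kappa>. C i)" by blast
      qed
    qed
  qed
qed

text \<open>Pairs \<open>(c, r)\<close> are read as column and row: every small set of rows lies in \<open>W\<close> up to
  a small set, every small set of columns misses \<open>W\<close> up to a small set.\<close>

definition square_split :: "'b rel \<Rightarrow> 'x set \<Rightarrow> ('x \<times> 'x) set \<Rightarrow> bool"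
  where "square_split \<kappa> X W \<longleftrightarrow>
    (\<forall>R \<subseteq> X. |R| <o \<kappa> \<longrightarrow> |X \<times> R - W| <o \<kappa>) \<and> (\<forall>C \<subseteq> X. |C| <o \<kappa> \<longrightarrow> |C \<times> X \<inter> W| <o \<kappa>)"

lemma card_of_ordIso_if_square_split:
  assumes co: "Card_order \<kappa>" and inf: "\<not> finite (Field \<kappa>)" and le: "\<kappa> \<le>o |X|"
    and split: "square_split \<kappa> X W"
  shows "|X| =o \<kappa>"
proof (rule ccontr)
  have rows: "\<And>R. R \<subseteq> X \<Longrightarrow> |R| <o \<kappa> \<Longrightarrow> |X \<times> R - W| <o \<kappa>"
    and cols: "\<And>C. C \<subseteq> X \<Longrightarrow> |C| <o \<kappa> \<Longrightarrow> |C \<times> X \<inter> W| <o \<kappa>"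
    using split unfolding square_split_def by blast+
  assume "\<not> |X| =o \<kappa>"
  with le have lt: "\<kappa> <o |X|" using ordLeq_iff_ordLess_or_ordIso ordIso_symmetric by blast
  have "|Field \<kappa>| \<le>o |X|" by (rule ordIso_ordLeq_trans[OF card_of_Field_ordIso[OF co] le])
  then obtain R where R: "R \<subseteq> X" "|Field \<kappa>| =o |R|" using internalize_card_of_ordLeq2 by blast
  have R_eq: "|R| =o \<kappa>"
    using ordIso_transitive[OF ordIso_symmetric[OF R(2)] card_of_Field_ordIso[OF co]] .
  have single: "|{x}| <o \<kappa>" for x by (rule finite_ordLess_infinite_Field[OF co inf]) simp
  define missed where "missed r = fst ` (X \<times> {r} - W)" for r
  have "|missed r| \<le>o \<kappa>" if "r \<in> R" for r
  proof -
    have "|X \<times> {r} - W| <o \<kappa>" using rows[OF _ single] that R(1) by blast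
    then show ?thesis
      unfolding missed_def by (rule ordLess_imp_ordLeq[OF ordLeq_ordLess_trans[OF card_of_image]])
  qed
  then have "|\<Union>r\<in>R. missed r| \<le>o \<kappa>"
    using card_of_UNION_ordLeq_infinite_Field[OF inf co ordIso_imp_ordLeq[OF R_eq]] by blast
  moreover have "\<not> X \<subseteq> (\<Union>r\<in>R. missed r)"
  proof
    assume "X \<subseteq> (\<Union>r\<in>R. missed r)"
    then have "|X| \<le>o |\<Union>r\<in>R. missed r|" by (rule card_of_mono1)
    then have "|X| \<le>o \<kappa>" using \<open>|\<Union>r\<in>R. missed r| \<le>o \<kappa>\<close> by (rule ordLeq_transitive)
    with lt show False by (simp add: not_ordLess_ordLeq)
  qed
  then obtain c where c: "c \<in> X" "c \<notin> (\<Union>r\<in>R. missed r)" by blast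
  have "R \<subseteq> snd ` ({c} \<times> X \<inter> W)"
  proof
    fix r assume "r \<in> R"
    then have "(c, r) \<in> W" using c R(1) by (force simp: missed_def)
    then show "r \<in> snd ` ({c} \<times> X \<inter> W)" using \<open>r \<in> R\<close> R(1) by force
  qed
  then have "|R| \<le>o |{c} \<times> X \<inter> W|"
    by (rule ordLeq_transitive[OF card_of_mono1 card_of_image])
  then have "|R| <o \<kappa>" by (rule ordLeq_ordLess_trans[OF _ cols[OF _ single]]) (use c(1) in simp)
  then show False using R_eq not_ordLess_ordIso by blast
qed

lemma regularCard_if_square_split:
  assumes co: "Card_order \<kappa>" and inf: "\<not> finite (Field \<kappa>)" and eq: "|X| =o \<kappa>"
    and split: "square_split \<kappa> X W"
  shows "regularCard \<kappa>"
proof (rule ccontr)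
  have rows: "\<And>R. R \<subseteq> X \<Longrightarrow> |R| <o \<kappa> \<Longrightarrow> |X \<times> R - W| <o \<kappa>"
    and cols: "\<And>C. C \<subseteq> X \<Longrightarrow> |C| <o \<kappa> \<Longrightarrow> |C \<times> X \<inter> W| <o \<kappa>"
    using split unfolding square_split_def by blast+
  assume "\<not> regularCard \<kappa>"
  then obtain K I where "K \<subseteq> Field \<kappa>" and K: "|K| <o \<kappa>" and I: "\<And>a. a \<in> K \<Longrightarrow> I a \<subseteq> X \<and> |I a| <o \<kappa>"
    and cover: "X \<subseteq> (\<Union>a\<in>K. I a)"
    using small_cover_if_not_regularCard[OF co eq] by blast
  define missed where "missed a = fst ` (X \<times> I a - W)" for a
  have "\<exists>c. c \<in> X - missed a" if "a \<in> K" for a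
  proof (rule ccontr)
    assume "\<nexists>c. c \<in> X - missed a"
    then have "X \<subseteq> missed a" by blast
    moreover have "|missed a| <o \<kappa>"
      unfolding missed_def using ordLeq_ordLess_trans[OF card_of_image rows] I[OF that] by blast
    ultimately have "|X| <o \<kappa>" by (rule ordLeq_ordLess_trans[OF card_of_mono1])
    then show False using eq not_ordLess_ordIso by blast
  qed
  then obtain col where col: "\<And>a. a \<in> K \<Longrightarrow> col a \<in> X - missed a" by metis
  have "X \<subseteq> snd ` (col ` K \<times> X \<inter> W)"
  proof
    fix r assume r: "r \<in> X"
    then obtain a where a: "a \<in> K" "r \<in> I a" using cover by blast
    then have "(col a, r) \<in> W" using col[OF a(1)] r by (force simp: missed_def)
    then show "r \<in> snd ` (col ` K \<times> X \<inter> W)" using a(1) r by force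
  qed
  then have "|X| \<le>o |col ` K \<times> X \<inter> W|"
    by (rule ordLeq_transitive[OF card_of_mono1 card_of_image])
  moreover have "|col ` K \<times> X \<inter> W| <o \<kappa>"
    by (rule cols) (use col ordLeq_ordLess_trans[OF card_of_image K] in auto)
  ultimately have "|X| <o \<kappa>" by (rule ordLeq_ordLess_trans)
  then show False using eq not_ordLess_ordIso by blast
qed

lemma card_of_ordIso_regularCard_if_square_split:
  assumes "Card_order \<kappa>" and "\<not> finite (Field \<kappa>)" and "\<kappa> \<le>o |X|" and "square_split \<kappa> X W"
  shows "|X| =o \<kappa> \<and> regularCard \<kappa>"
  using card_of_ordIso_if_square_split[OF assms] regularCard_if_square_split[OF assms(1,2) _ assms(4)]
  by blast

section \<open>Two maps with injective quotients\<close>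

context group
begin

lemma card_of_carrier_infinite:
  assumes "infinite (carrier G)"
  shows "Card_order |carrier G|" and "\<not> finite (Field |carrier G| )"
  by (fact card_of_Card_order) (use assms in \<open>simp add: Field_card_of\<close>)

text \<open>\<open>Inl r\<close> is the row \<open>r\<close> and \<open>Inr c\<close> the column \<open>c\<close>; rows and columns
  are enumerated along one well-order, \<open>f (Inl r)\<close> becomes \<open>k r\<close> and \<open>f (Inr c)\<close>
  becomes \<open>h c\<close>.  A new line must avoid the earlier values and must not reproduce, with
  an earlier line of the other kind, a quotient \<open>k r\<inverse> h c\<close> that is already there.\<close>

abbreviation lines :: "('a + 'a) set"
  where "lines \<equiv> carrier G <+> carrier G"

definition quotients_before :: "('a + 'a \<Rightarrow> 'a) \<Rightarrow> 'a + 'a \<Rightarrow> 'a set"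
  where "quotients_before f v =
    {inv (f (Inl r)) \<otimes> f (Inr c) | r c. Inl r \<in> before lines v \<and> Inr c \<in> before lines v}"

definition quotient_forbidden :: "('a + 'a \<Rightarrow> 'a) \<Rightarrow> 'a + 'a \<Rightarrow> 'a set"
  where "quotient_forbidden f v = f ` before lines v
    \<union> (\<lambda>(u, w). f u \<otimes> w) ` (before lines v \<times> quotients_before f v)
    \<union> (\<lambda>(u, w). f u \<otimes> inv w) ` (before lines v \<times> quotients_before f v)"

lemma card_of_quotient_forbidden:
  assumes inf: "infinite (carrier G)" and v: "v \<in> lines"
  shows "|quotient_forbidden f v| <o |carrier G|"
proof -
  note co = card_of_carrier_infinite[OF inf]
  have "|lines| =o |carrier G|"
    by (rule card_of_Plus_infinite1[OF inf ordLeq_reflexive[OF card_of_Well_order]])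
  then have B: "|before lines v| <o |carrier G|"
    by (rule ordLess_ordIso_trans[OF card_of_before[OF v]])
  have "quotients_before f v \<subseteq> (\<lambda>(u, u'). inv (f u) \<otimes> f u') ` (before lines v \<times> before lines v)"
    unfolding quotients_before_def by force
  then have "|quotients_before f v| <o |carrier G|"
    by (rule ordLeq_ordLess_trans[OF card_of_mono1 card_of_image_ordLess
          [OF card_of_Times_ordLess_infinite_Field[OF co B B]]])
  then have "|before lines v \<times> quotients_before f v| <o |carrier G|"
    by (rule card_of_Times_ordLess_infinite_Field[OF co B])
  then show ?thesis unfolding quotient_forbidden_def
    by (intro card_of_Un_ordLess_infinite_Field[OF co(2,1)] card_of_image_ordLess B)
qed

lemma exists_quotient_avoiding:
  assumes "infinite (carrier G)"
  obtains f where "\<And>v. v \<in> lines \<Longrightarrow> f v \<in> carrier G - quotient_forbidden f v"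
proof (rule card_of_greedy_choice)
  show "quotient_forbidden f v = quotient_forbidden g v"
    if "\<And>u. u \<in> before lines v \<Longrightarrow> f u = g u" for f g v
  proof -
    have "quotients_before f v = quotients_before g v"
      unfolding quotients_before_def by (rule Collect_cong) (metis that)
    then show ?thesis unfolding quotient_forbidden_def
      by (intro arg_cong2[where f = "(\<union>)"] image_cong) (auto simp: that)
  qed
qed (use card_of_quotient_forbidden[OF assms] in auto)

definition pair_stage :: "'a \<times> 'a \<Rightarrow> 'a + 'a"
  where "pair_stage = (\<lambda>(c, r). if Inl r \<in> before lines (Inr c) then Inr c else Inl r)"

lemma pair_stage_cases:
  assumes "c \<in> carrier G" and "r \<in> carrier G"
  shows "Inl r \<in> before lines (Inr c) \<and> pair_stage (c, r) = Inr c
    \<or> Inr c \<in> before lines (Inl r) \<and> pair_stage (c, r) = Inl r"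
proof (cases "Inl r \<in> before lines (Inr c)")
  case False
  then have "Inr c \<in> before lines (Inl r)"
    using before_total[of "Inl r" lines "Inr c"] assms by (simp add: InlI InrI)
  with False show ?thesis by (simp add: pair_stage_def)
qed (simp add: pair_stage_def)

lemma pair_stage_in_lines: "p \<in> carrier G \<times> carrier G \<Longrightarrow> pair_stage p \<in> lines"
  by (cases p) (simp add: pair_stage_def InlI InrI)

context
  fixes f :: "'a + 'a \<Rightarrow> 'a"
  assumes avoid: "\<And>v. v \<in> lines \<Longrightarrow> f v \<in> carrier G - quotient_forbidden f v"
begin

lemma inj_on_lines: "inj_on f lines"
proof (rule inj_on_if_distinct_from_before)
  fix u v assume "v \<in> lines" "u \<in> before lines v"
  then have "f u \<in> quotient_forbidden f v" unfolding quotient_forbidden_def by blast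
  then show "f u \<noteq> f v" using avoid[of v] \<open>v \<in> lines\<close> by auto
qed

lemma quotient_not_before_pair_stage:
  assumes c: "c \<in> carrier G" and r: "r \<in> carrier G"
  shows "inv (f (Inl r)) \<otimes> f (Inr c) \<notin> quotients_before f (pair_stage (c, r))"
proof
  let ?w = "inv (f (Inl r)) \<otimes> f (Inr c)"
  assume w: "?w \<in> quotients_before f (pair_stage (c, r))"
  have fr: "f (Inl r) \<in> carrier G" and fc: "f (Inr c) \<in> carrier G" using avoid r c by auto
  from pair_stage_cases[OF c r] show False
  proof (elim disjE conjE)
    assume "Inl r \<in> before lines (Inr c)" and "pair_stage (c, r) = Inr c"
    moreover have "f (Inr c) = f (Inl r) \<otimes> ?w" using fr fc by (simp add: m_assoc [symmetric])
    ultimately have "f (Inr c) \<in> quotient_forbidden f (Inr c)"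
      using w unfolding quotient_forbidden_def by force
    then show False using avoid[of "Inr c"] c by auto
  next
    assume "Inr c \<in> before lines (Inl r)" and "pair_stage (c, r) = Inl r"
    moreover have "f (Inl r) = f (Inr c) \<otimes> inv ?w"
      using fr fc by (simp add: inv_mult_group m_assoc [symmetric])
    ultimately have "f (Inl r) \<in> quotient_forbidden f (Inl r)"
      using w unfolding quotient_forbidden_def by force
    then show False using avoid[of "Inl r"] r by auto
  qed
qed

lemma quotient_before_later_stage:
  assumes c: "c \<in> carrier G" and r: "r \<in> carrier G" and v: "pair_stage (c, r) \<in> before lines v"
  shows "inv (f (Inl r)) \<otimes> f (Inr c) \<in> quotients_before f v"
proof -
  have "Inl r \<in> before lines v \<and> Inr c \<in> before lines v"
    using pair_stage_cases[OF c r] v before_trans[of _ lines "pair_stage (c, r)" v] by auto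
  then show ?thesis unfolding quotients_before_def by auto
qed

lemma quotient_eq_same_stage:
  assumes carrier: "c \<in> carrier G" "r \<in> carrier G" "c' \<in> carrier G" "r' \<in> carrier G"
    and stage: "pair_stage (c, r) = pair_stage (c', r')"
    and eq: "inv (f (Inl r)) \<otimes> f (Inr c) = inv (f (Inl r')) \<otimes> f (Inr c')"
  shows "(c, r) = (c', r')"
proof -
  have f_carrier: "f (Inl x) \<in> carrier G" "f (Inr x) \<in> carrier G" if "x \<in> carrier G" for x
    using avoid that by auto
  have "pair_stage (c, r) \<in> {Inr c, Inl r}" "pair_stage (c', r') \<in> {Inr c', Inl r'}"
    by (simp_all add: pair_stage_def)
  with stage consider "c = c'" | "r = r'" by auto
  then show ?thesis
  proof cases
    case 1
    with eq have "inv (f (Inl r)) = inv (f (Inl r'))" using carrier f_carrier by simp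
    then have "f (Inl r) = f (Inl r')" using carrier f_carrier by (metis inv_inv)
    then have "r = r'" using inj_onD[OF inj_on_lines] carrier by blast
    with 1 show ?thesis by simp
  next
    case 2
    with eq have "f (Inr c) = f (Inr c')" using carrier f_carrier by simp
    then have "c = c'" using inj_onD[OF inj_on_lines] carrier by blast
    with 2 show ?thesis by simp
  qed
qed

text \<open>Each pair is completed at the later of its two lines; a coincidence of quotients
  completed at different stages would put the later one among the values it had to avoid.\<close>

lemma inj_on_quotients: "inj_on (\<lambda>(c, r). inv (f (Inl r)) \<otimes> f (Inr c)) (carrier G \<times> carrier G)"
proof (rule inj_onI, clarify)
  fix c r c' r'
  assume cr: "c \<in> carrier G" "r \<in> carrier G" "c' \<in> carrier G" "r' \<in> carrier G"
    and eq: "inv (f (Inl r)) \<otimes> f (Inr c) = inv (f (Inl r')) \<otimes> f (Inr c')"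
  have "pair_stage (c, r) \<in> lines" "pair_stage (c', r') \<in> lines"
    using cr by (simp_all add: pair_stage_in_lines)
  then consider "pair_stage (c, r) = pair_stage (c', r')"
    | "pair_stage (c, r) \<in> before lines (pair_stage (c', r'))"
    | "pair_stage (c', r') \<in> before lines (pair_stage (c, r))"
    using before_total by metis
  then show "c = c' \<and> r = r'"
  proof cases
    case 1
    then show ?thesis using quotient_eq_same_stage[OF cr 1 eq] by simp
  next
    case 2
    then show ?thesis
      using quotient_before_later_stage[OF cr(1,2) 2] quotient_not_before_pair_stage[OF cr(3,4)] eq
      by simp
  next
    case 3
    then show ?thesis
      using quotient_before_later_stage[OF cr(3,4) 3] quotient_not_before_pair_stage[OF cr(1,2)] eq
      by simp
  qed
qed

end

lemma exists_inj_on_quotients: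
  assumes "infinite (carrier G)"
  obtains k h where "k \<in> carrier G \<rightarrow> carrier G" and "h \<in> carrier G \<rightarrow> carrier G"
    and "inj_on (\<lambda>(c, r). inv (k r) \<otimes> h c) (carrier G \<times> carrier G)"
proof -
  obtain f where f: "\<And>v. v \<in> lines \<Longrightarrow> f v \<in> carrier G - quotient_forbidden f v"
    using exists_quotient_avoiding[OF assms] by blast
  show ?thesis
  proof (rule that[of "f \<circ> Inl" "f \<circ> Inr"])
    have "f (Inl x) \<in> carrier G" "f (Inr x) \<in> carrier G" if "x \<in> carrier G" for x
      using f[of "Inl x"] f[of "Inr x"] that by auto
    then show "f \<circ> Inl \<in> carrier G \<rightarrow> carrier G" "f \<circ> Inr \<in> carrier G \<rightarrow> carrier G" by auto
    show "inj_on (\<lambda>(c, r). inv ((f \<circ> Inl) r) \<otimes> (f \<circ> Inr) c) (carrier G \<times> carrier G)"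
      using inj_on_quotients[OF f] by simp
  qed
qed

section \<open>The grid\<close>

abbreviation cells :: "('a \<times> 'a) set"
  where "cells \<equiv> carrier G \<times> carrier G"

text \<open>\<open>z (c, r)\<close> is the grid point in column \<open>c\<close> and row \<open>r\<close>; it will lie in
  \<open>k r A \<inter> h c B\<close> for \<open>A\<close> the row parts and \<open>B\<close> the column parts.  A new point must keep
  \<open>z\<close> and both parts injective, and must not create a quotient \<open>a b\<inverse>\<close> of a part
  with an earlier part that already occurs among earlier points.\<close>

definition row_part :: "('a \<Rightarrow> 'a) \<Rightarrow> ('a \<times> 'a \<Rightarrow> 'a) \<Rightarrow> 'a \<times> 'a \<Rightarrow> 'a"
  where "row_part k z p = inv (k (snd p)) \<otimes> z p"

definition col_part :: "('a \<Rightarrow> 'a) \<Rightarrow> ('a \<times> 'a \<Rightarrow> 'a) \<Rightarrow> 'a \<times> 'a \<Rightarrow> 'a"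
  where "col_part h z p = inv (h (fst p)) \<otimes> z p"

definition grid_quotient ::
    "('a \<Rightarrow> 'a) \<Rightarrow> ('a \<Rightarrow> 'a) \<Rightarrow> ('a \<times> 'a \<Rightarrow> 'a) \<Rightarrow> 'a \<times> 'a \<Rightarrow> 'a \<times> 'a \<Rightarrow> 'a"
  where "grid_quotient k h z p q = row_part k z p \<otimes> inv (col_part h z q)"

definition grid_quotients_before ::
    "('a \<Rightarrow> 'a) \<Rightarrow> ('a \<Rightarrow> 'a) \<Rightarrow> ('a \<times> 'a \<Rightarrow> 'a) \<Rightarrow> 'a \<times> 'a \<Rightarrow> 'a set"
  where "grid_quotients_before k h z p =
    {grid_quotient k h z u w | u w. u \<in> before cells p \<and> w \<in> before cells p}"

definition grid_forbidden ::
    "('a \<Rightarrow> 'a) \<Rightarrow> ('a \<Rightarrow> 'a) \<Rightarrow> ('a \<times> 'a \<Rightarrow> 'a) \<Rightarrow> 'a \<times> 'a \<Rightarrow> 'a set"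
  where "grid_forbidden k h z p = z ` before cells p
    \<union> (\<lambda>u. k (snd p) \<otimes> row_part k z u) ` before cells p
    \<union> (\<lambda>u. h (fst p) \<otimes> col_part h z u) ` before cells p
    \<union> (\<lambda>(w, q). k (snd p) \<otimes> w \<otimes> col_part h z q) ` (grid_quotients_before k h z p \<times> before cells p)
    \<union> (\<lambda>(w, q). h (fst p) \<otimes> inv w \<otimes> row_part k z q) ` (grid_quotients_before k h z p \<times> before cells p)"

text \<open>A pair of cells is diagonal, completed at its first, or completed at its second
  entry; \<open>grid_quotient\<close> will be injective on each kind.\<close>

definition grid_tag :: "'a \<times> 'a \<Rightarrow> 'a \<times> 'a \<Rightarrow> nat"
  where "grid_tag p q = (if p = q then 0 else if q \<in> before cells p then 1 else 2)"

lemma card_of_grid_forbidden: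
  assumes inf: "infinite (carrier G)" and p: "p \<in> cells"
  shows "|grid_forbidden k h z p| <o |carrier G|"
proof -
  note co = card_of_carrier_infinite[OF inf]
  have "|before cells p| <o |cells|" by (rule card_of_before[OF p])
  then have B: "|before cells p| <o |carrier G|"
    by (rule ordLess_ordIso_trans[OF _ card_of_Times_same_infinite[OF inf]])
  have "grid_quotients_before k h z p
      \<subseteq> (\<lambda>(u, w). grid_quotient k h z u w) ` (before cells p \<times> before cells p)"
    unfolding grid_quotients_before_def by force
  then have "|grid_quotients_before k h z p| <o |carrier G|"
    by (rule ordLeq_ordLess_trans[OF card_of_mono1 card_of_image_ordLess
          [OF card_of_Times_ordLess_infinite_Field[OF co B B]]])
  then have "|grid_quotients_before k h z p \<times> before cells p| <o |carrier G|"
    by (rule card_of_Times_ordLess_infinite_Field[OF co _ B])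
  then show ?thesis unfolding grid_forbidden_def
    by (intro card_of_Un_ordLess_infinite_Field[OF co(2,1)] card_of_image_ordLess B)
qed

lemma exists_grid_avoiding:
  assumes "infinite (carrier G)"
  obtains z where "\<And>p. p \<in> cells \<Longrightarrow> z p \<in> carrier G - grid_forbidden k h z p"
proof (rule card_of_greedy_choice)
  show "grid_forbidden k h z p = grid_forbidden k h z' p"
    if same: "\<And>u. u \<in> before cells p \<Longrightarrow> z u = z' u" for z z' p
  proof -
    have row: "row_part k z u = row_part k z' u" and col: "col_part h z u = col_part h z' u"
      if "u \<in> before cells p" for u
      using same[OF that] by (simp_all add: row_part_def col_part_def)
    have "grid_quotients_before k h z p = grid_quotients_before k h z' p"
      unfolding grid_quotients_before_def grid_quotient_def by (rule Collect_cong) (metis row col)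
    then show ?thesis unfolding grid_forbidden_def
      by (intro arg_cong2[where f = "(\<union>)"] image_cong) (auto simp: same row col)
  qed
qed (use card_of_grid_forbidden[OF assms] in auto)

lemma mult_inv_cancel_left: "x \<in> carrier G \<Longrightarrow> y \<in> carrier G \<Longrightarrow> x \<otimes> (inv x \<otimes> y) = y"
  by (simp add: m_assoc [symmetric])

lemma inv_mult_cancel_left: "x \<in> carrier G \<Longrightarrow> y \<in> carrier G \<Longrightarrow> inv x \<otimes> (x \<otimes> y) = y"
  by (simp add: m_assoc [symmetric])

lemmas group_cancel_simps = m_assoc mult_inv_cancel_left inv_mult_cancel_left inv_mult_group

lemma grid_quotient_row_identity:
  assumes "k (snd p) \<in> carrier G" "h (fst q) \<in> carrier G" "z p \<in> carrier G" "z q \<in> carrier G"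
  shows "z p = k (snd p) \<otimes> grid_quotient k h z p q \<otimes> col_part h z q"
  using assms by (simp add: grid_quotient_def row_part_def col_part_def group_cancel_simps)

lemma grid_quotient_col_identity:
  assumes "k (snd q) \<in> carrier G" "h (fst p) \<in> carrier G" "z p \<in> carrier G" "z q \<in> carrier G"
  shows "z p = h (fst p) \<otimes> inv (grid_quotient k h z q p) \<otimes> row_part k z q"
  using assms by (simp add: grid_quotient_def row_part_def col_part_def group_cancel_simps)

lemma grid_quotient_diagonal:
  assumes "k (snd p) \<in> carrier G" "h (fst p) \<in> carrier G" "z p \<in> carrier G"
  shows "grid_quotient k h z p p = inv (k (snd p)) \<otimes> h (fst p)"
  using assms by (simp add: grid_quotient_def row_part_def col_part_def group_cancel_simps)

context
  fixes k h :: "'a \<Rightarrow> 'a" and z :: "'a \<times> 'a \<Rightarrow> 'a"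
  assumes k: "k \<in> carrier G \<rightarrow> carrier G" and h: "h \<in> carrier G \<rightarrow> carrier G"
    and avoid: "\<And>p. p \<in> cells \<Longrightarrow> z p \<in> carrier G - grid_forbidden k h z p"
begin

lemma grid_closed:
  assumes "p \<in> cells"
  shows "k (snd p) \<in> carrier G" "h (fst p) \<in> carrier G" "z p \<in> carrier G"
    and "row_part k z p \<in> carrier G" "col_part h z p \<in> carrier G"
proof -
  show kp: "k (snd p) \<in> carrier G" and hp: "h (fst p) \<in> carrier G"
    using assms k h by auto
  show zp: "z p \<in> carrier G" using avoid[OF assms] by simp
  show "row_part k z p \<in> carrier G" "col_part h z p \<in> carrier G"
    using kp hp zp by (simp_all add: row_part_def col_part_def)
qed

lemma grid_avoids:
  assumes "p \<in> cells" and "u \<in> before cells p"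
  shows "z p \<noteq> z u" and "z p \<noteq> k (snd p) \<otimes> row_part k z u" and "z p \<noteq> h (fst p) \<otimes> col_part h z u"
    and "w \<in> grid_quotients_before k h z p \<Longrightarrow> z p \<noteq> k (snd p) \<otimes> w \<otimes> col_part h z u"
    and "w \<in> grid_quotients_before k h z p \<Longrightarrow> z p \<noteq> h (fst p) \<otimes> inv w \<otimes> row_part k z u"
  using avoid[OF assms(1)] assms(2) unfolding grid_forbidden_def by (auto simp del: Diff_iff)

lemma inj_on_grid: "inj_on z cells"
proof (rule inj_on_if_distinct_from_before)
  fix u p assume "p \<in> cells" "u \<in> before cells p"
  then show "z u \<noteq> z p" using grid_avoids(1) by metis
qed

lemma inj_on_row_part: "inj_on (row_part k z) cells"
proof (rule inj_on_if_distinct_from_before)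
  fix u p assume p: "p \<in> cells" and u: "u \<in> before cells p"
  have "z p = k (snd p) \<otimes> row_part k z p"
    using grid_closed[OF p] by (simp add: row_part_def group_cancel_simps)
  then show "row_part k z u \<noteq> row_part k z p" using grid_avoids(2)[OF p u] by metis
qed

lemma inj_on_col_part: "inj_on (col_part h z) cells"
proof (rule inj_on_if_distinct_from_before)
  fix u p assume p: "p \<in> cells" and u: "u \<in> before cells p"
  have "z p = h (fst p) \<otimes> col_part h z p"
    using grid_closed[OF p] by (simp add: col_part_def group_cancel_simps)
  then show "col_part h z u \<noteq> col_part h z p" using grid_avoids(3)[OF p u] by metis
qed

lemma grid_quotient_not_before:
  assumes p: "p \<in> cells" and q: "q \<in> before cells p"
  shows "grid_quotient k h z p q \<notin> grid_quotients_before k h z p"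
    and "grid_quotient k h z q p \<notin> grid_quotients_before k h z p"
proof -
  have q': "q \<in> cells" by (rule subsetD[OF before_subset q])
  show "grid_quotient k h z p q \<notin> grid_quotients_before k h z p"
  proof
    assume "grid_quotient k h z p q \<in> grid_quotients_before k h z p"
    moreover have "z p = k (snd p) \<otimes> grid_quotient k h z p q \<otimes> col_part h z q"
      by (rule grid_quotient_row_identity) (use grid_closed[OF p] grid_closed[OF q'] in auto)
    ultimately show False using grid_avoids(4)[OF p q] by simp
  qed
  show "grid_quotient k h z q p \<notin> grid_quotients_before k h z p"
  proof
    assume "grid_quotient k h z q p \<in> grid_quotients_before k h z p"
    moreover have "z p = h (fst p) \<otimes> inv (grid_quotient k h z q p) \<otimes> row_part k z q"
      by (rule grid_quotient_col_identity) (use grid_closed[OF p] grid_closed[OF q'] in auto)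
    ultimately show False using grid_avoids(5)[OF p q] by simp
  qed
qed

lemma grid_quotient_before:
  "u \<in> before cells p \<Longrightarrow> w \<in> before cells p \<Longrightarrow> grid_quotient k h z u w \<in> grid_quotients_before k h z p"
  unfolding grid_quotients_before_def by (intro CollectI exI[of _ u] exI[of _ w]) simp

lemma grid_quotient_eq_row_stage:
  assumes p1: "p1 \<in> cells" and p2: "p2 \<in> cells"
    and q1: "q1 \<in> before cells p1" and q2: "q2 \<in> before cells p2"
    and eq: "grid_quotient k h z p1 q1 = grid_quotient k h z p2 q2"
  shows "p1 = p2 \<and> q1 = q2"
proof -
  have q1': "q1 \<in> cells" and q2': "q2 \<in> cells"
    using subsetD[OF before_subset q1] subsetD[OF before_subset q2] .
  consider "p1 = p2" | "p1 \<in> before cells p2" | "p2 \<in> before cells p1"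
    using before_total[OF p1 p2] by metis
  then show ?thesis
  proof cases
    case 1
    with eq have "inv (col_part h z q1) = inv (col_part h z q2)"
      using grid_closed[OF p1] grid_closed[OF q1'] grid_closed[OF q2'] by (simp add: grid_quotient_def)
    then have "col_part h z q1 = col_part h z q2"
      using grid_closed[OF q1'] grid_closed[OF q2'] by (metis inv_inv)
    with 1 show ?thesis using inj_onD[OF inj_on_col_part _ q1' q2'] by blast
  next
    case 2
    then have "grid_quotient k h z p1 q1 \<in> grid_quotients_before k h z p2"
      using grid_quotient_before before_trans[OF q1 2] by blast
    then show ?thesis using grid_quotient_not_before(1)[OF p2 q2] eq by simp
  next
    case 3
    then have "grid_quotient k h z p2 q2 \<in> grid_quotients_before k h z p1"
      using grid_quotient_before before_trans[OF q2 3] by blast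
    then show ?thesis using grid_quotient_not_before(1)[OF p1 q1] eq by simp
  qed
qed

lemma grid_quotient_eq_col_stage:
  assumes q1: "q1 \<in> cells" and q2: "q2 \<in> cells"
    and p1: "p1 \<in> before cells q1" and p2: "p2 \<in> before cells q2"
    and eq: "grid_quotient k h z p1 q1 = grid_quotient k h z p2 q2"
  shows "p1 = p2 \<and> q1 = q2"
proof -
  have p1': "p1 \<in> cells" and p2': "p2 \<in> cells"
    using subsetD[OF before_subset p1] subsetD[OF before_subset p2] .
  consider "q1 = q2" | "q1 \<in> before cells q2" | "q2 \<in> before cells q1"
    using before_total[OF q1 q2] by metis
  then show ?thesis
  proof cases
    case 1
    with eq have "row_part k z p1 = row_part k z p2"
      using grid_closed[OF q1] grid_closed[OF p1'] grid_closed[OF p2'] by (simp add: grid_quotient_def)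
    with 1 show ?thesis using inj_onD[OF inj_on_row_part _ p1' p2'] by blast
  next
    case 2
    then have "grid_quotient k h z p1 q1 \<in> grid_quotients_before k h z q2"
      using grid_quotient_before before_trans[OF p1 2] by blast
    then show ?thesis using grid_quotient_not_before(2)[OF q2 p2] eq by simp
  next
    case 3
    then have "grid_quotient k h z p2 q2 \<in> grid_quotients_before k h z q1"
      using grid_quotient_before before_trans[OF p2 3] by blast
    then show ?thesis using grid_quotient_not_before(2)[OF q1 p1] eq by simp
  qed
qed

lemma grid_quotient_tagged_eq:
  assumes quot: "inj_on (\<lambda>(c, r). inv (k r) \<otimes> h c) cells"
    and cells: "p1 \<in> cells" "q1 \<in> cells" "p2 \<in> cells" "q2 \<in> cells"
    and eq: "grid_quotient k h z p1 q1 = grid_quotient k h z p2 q2"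
    and tag: "grid_tag p1 q1 = grid_tag p2 q2"
  shows "p1 = p2 \<and> q1 = q2"
proof -
  consider "p1 = q1" | "q1 \<in> before cells p1" | "p1 \<in> before cells q1"
    using before_total[OF cells(1,2)] by metis
  then show ?thesis
  proof cases
    case 1
    with tag have "p2 = q2" by (simp add: grid_tag_def split: if_splits)
    with 1 eq have "inv (k (snd p1)) \<otimes> h (fst p1) = inv (k (snd p2)) \<otimes> h (fst p2)"
      using grid_closed[OF cells(1)] grid_closed[OF cells(3)] by (simp add: grid_quotient_diagonal)
    then have "p1 = p2" using inj_onD[OF quot _ cells(1) cells(3)] by (simp add: case_prod_beta)
    with 1 \<open>p2 = q2\<close> show ?thesis by simp
  next
    case 2
    then have "p1 \<noteq> q1" by (auto simp: underS_def)
    with 2 tag have "q2 \<in> before cells p2" by (simp add: grid_tag_def split: if_splits)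
    with 2 show ?thesis using grid_quotient_eq_row_stage[OF cells(1,3) _ _ eq] by blast
  next
    case 3
    then have "p1 \<noteq> q1" "q1 \<notin> before cells p1" using before_asym[OF 3] by (auto simp: underS_def)
    with tag have "p2 \<noteq> q2" "q2 \<notin> before cells p2" by (simp_all add: grid_tag_def split: if_splits)
    then have "p2 \<in> before cells q2" using before_total[OF cells(3,4)] by metis
    with 3 show ?thesis using grid_quotient_eq_col_stage[OF cells(2,4) _ _ eq] by blast
  qed
qed

lemma inj_on_grid_quotient_tagged:
  assumes quot: "inj_on (\<lambda>(c, r). inv (k r) \<otimes> h c) cells"
  shows "inj_on (\<lambda>(p, q). (grid_quotient k h z p q, grid_tag p q)) (cells \<times> cells)"
proof (rule inj_onI)
  fix x y assume "x \<in> cells \<times> cells" "y \<in> cells \<times> cells"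
    and "(\<lambda>(p, q). (grid_quotient k h z p q, grid_tag p q)) x
      = (\<lambda>(p, q). (grid_quotient k h z p q, grid_tag p q)) y"
  then show "x = y" using grid_quotient_tagged_eq[OF quot, of "fst x" "snd x" "fst y" "snd y"]
    by (simp add: case_prod_beta mem_Times_iff prod_eq_iff)
qed

end

lemma exists_grid:
  assumes inf: "infinite (carrier G)"
  obtains k h z where "k \<in> carrier G \<rightarrow> carrier G" and "h \<in> carrier G \<rightarrow> carrier G"
    and "z \<in> cells \<rightarrow> carrier G" and "inj_on z cells"
    and "inj_on (\<lambda>(p, q). (grid_quotient k h z p q, grid_tag p q)) (cells \<times> cells)"
proof -
  obtain k h where k: "k \<in> carrier G \<rightarrow> carrier G" and h: "h \<in> carrier G \<rightarrow> carrier G"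
    and quot: "inj_on (\<lambda>(c, r). inv (k r) \<otimes> h c) cells"
    using exists_inj_on_quotients[OF inf] by blast
  obtain z where z: "\<And>p. p \<in> cells \<Longrightarrow> z p \<in> carrier G - grid_forbidden k h z p"
    using exists_grid_avoiding[OF inf] by blast
  show ?thesis
  proof (rule that[OF k h])
    show "z \<in> cells \<rightarrow> carrier G" using z by blast
  qed (use inj_on_grid[OF k h z] inj_on_grid_quotient_tagged[OF k h z quot] in auto)
qed

end

section \<open>The ballean of small subsets\<close>

lemma lin_ordered_base_image:
  assumes "lin_ordered_base F" and "\<phi> ` F \<subseteq> F'"
    and mono: "\<And>A B. A \<in> F \<Longrightarrow> B \<in> F \<Longrightarrow> A \<subseteq> B \<Longrightarrow> \<phi> A \<subseteq> \<phi> B"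
    and cofinal: "\<And>A'. A' \<in> F' \<Longrightarrow> \<exists>A\<in>F. A' \<subseteq> \<phi> A"
  shows "lin_ordered_base F'"
proof -
  obtain L where L: "L \<subseteq> F" "\<forall>A\<in>L. \<forall>B\<in>L. A \<subseteq> B \<or> B \<subseteq> A" "\<forall>A\<in>F. \<exists>B\<in>L. A \<subseteq> B"
    using assms(1) unfolding lin_ordered_base_def by (elim exE conjE) (rule that)
  show ?thesis unfolding lin_ordered_base_def
  proof (intro exI[of _ "\<phi> ` L"] conjI ballI)
    show "\<phi> ` L \<subseteq> F'" using L(1) assms(2) by blast
    show "A' \<subseteq> B' \<or> B' \<subseteq> A'" if A'B': "A' \<in> \<phi> ` L" "B' \<in> \<phi> ` L" for A' B'
    proof -
      obtain A B where AB: "A \<in> L" "B \<in> L" "A' = \<phi> A" "B' = \<phi> B" using A'B' by blast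
      then have "A \<in> F" "B \<in> F" using L(1) by blast+
      with AB L(2) show ?thesis using mono by metis
    qed
    show "\<exists>B'\<in>\<phi> ` L. A' \<subseteq> B'" if A': "A' \<in> F'" for A'
    proof -
      obtain A where A: "A \<in> F" "A' \<subseteq> \<phi> A" using cofinal[OF A'] by blast
      then obtain B where B: "B \<in> L" "A \<subseteq> B" using L(3) by blast
      then have "\<phi> A \<subseteq> \<phi> B" using mono A(1) L(1) by blast
      then show ?thesis using A(2) B(1) by blast
    qed
  qed
qed

context group
begin

lemma ent_Image_singleton:
  assumes "x \<in> carrier G" and "I \<subseteq> carrier G"
  shows "ent G I `` {x} = insert x ((\<lambda>i. i \<otimes> x) ` I)"
  using assms unfolding ent_def by auto

lemma quotient_eq_if_mult_eq:
  assumes "i \<otimes> a = j \<otimes> b" and "i \<in> carrier G" "a \<in> carrier G" "j \<in> carrier G" "b \<in> carrier G"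
  shows "a \<otimes> inv b = inv i \<otimes> j"
proof -
  have "a = inv i \<otimes> (j \<otimes> b)" using assms by (simp add: inv_solve_left)
  then show ?thesis using assms(2-5) by (simp add: m_assoc)
qed

lemma ent_mono: "I \<subseteq> J \<Longrightarrow> ent G I \<subseteq> ent G J"
  unfolding ent_def by auto

lemma ent_subset_carrier: "ent G I \<subseteq> carrier G \<times> carrier G"
  unfolding ent_def by auto

lemma mult_mem_ent_Image:
  "i \<in> I \<Longrightarrow> I \<subseteq> carrier G \<Longrightarrow> x \<in> S \<Longrightarrow> S \<subseteq> carrier G \<Longrightarrow> i \<otimes> x \<in> ent G I `` S"
  unfolding ent_def by blast

lemma l_coset_subset_ent_Image: "i \<in> I \<Longrightarrow> I \<subseteq> carrier G \<Longrightarrow> S \<subseteq> carrier G \<Longrightarrow> i <# S \<subseteq> ent G I `` S"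
  unfolding l_coset_def ent_def by blast

lemma ent_Image_subset: "ent G I `` S \<subseteq> {i \<otimes> x | i x. i \<in> insert \<one> I \<and> x \<in> S \<and> x \<in> carrier G}"
  unfolding ent_def by force

end

locale group_ballean = group G for G :: "('a, 'm) monoid_scheme" (structure) +
  fixes \<kappa> :: "'b rel"
  assumes Card_order_kappa: "Card_order \<kappa>" and infinite_kappa: "\<not> finite (Field \<kappa>)"
begin

lemma finite_ordLess_kappa: "finite A \<Longrightarrow> |A| <o \<kappa>"
  by (rule finite_ordLess_infinite_Field[OF Card_order_kappa infinite_kappa])

lemma Un_ordLess_kappa: "|A| <o \<kappa> \<Longrightarrow> |B| <o \<kappa> \<Longrightarrow> |A \<union> B| <o \<kappa>"
  by (rule card_of_Un_ordLess_infinite_Field[OF infinite_kappa Card_order_kappa])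

lemma Times_ordLess_kappa: "|A| <o \<kappa> \<Longrightarrow> |B| <o \<kappa> \<Longrightarrow> |A \<times> B| <o \<kappa>"
  by (rule card_of_Times_ordLess_infinite_Field[OF Card_order_kappa infinite_kappa])

lemma ent_in_ball_structure: "I \<subseteq> carrier G \<Longrightarrow> |I| <o \<kappa> \<Longrightarrow> ent G I \<in> ball_structure G \<kappa>"
  unfolding ball_structure_def small_subsets_def by blast

lemma ball_structureE:
  assumes "E \<in> ball_structure G \<kappa>"
  obtains I where "I \<subseteq> carrier G" and "|I| <o \<kappa>" and "E = ent G I"
  using assms unfolding ball_structure_def small_subsets_def by blast

lemma bounded_in_ball_structure_iff:
  "bounded_in (carrier G) (ball_structure G \<kappa>) B \<longleftrightarrow> B \<subseteq> carrier G \<and> |B| <o \<kappa>"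
proof
  assume "bounded_in (carrier G) (ball_structure G \<kappa>) B"
  then obtain E x where E: "E \<in> ball_structure G \<kappa>" and x: "x \<in> carrier G" and B: "B \<subseteq> E `` {x}"
    unfolding bounded_in_def by blast
  obtain I where I: "I \<subseteq> carrier G" "|I| <o \<kappa>" "E = ent G I" using E by (rule ball_structureE)
  have B': "B \<subseteq> insert x ((\<lambda>i. i \<otimes> x) ` I)" using B ent_Image_singleton[OF x I(1)] I(3) by simp
  have "|insert x ((\<lambda>i. i \<otimes> x) ` I)| <o \<kappa>"
    using Un_ordLess_kappa[OF finite_ordLess_kappa card_of_image_ordLess[OF I(2)], of "{x}"] by simp
  then have "|B| <o \<kappa>" by (rule card_of_subset_ordLess[OF B'])
  moreover have "B \<subseteq> carrier G" using B' x I(1) by auto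
  ultimately show "B \<subseteq> carrier G \<and> |B| <o \<kappa>" by simp
next
  assume B: "B \<subseteq> carrier G \<and> |B| <o \<kappa>"
  then have "B \<subseteq> ent G B `` {\<one>}" by (simp add: ent_Image_singleton subset_iff)
  moreover have "ent G B \<in> ball_structure G \<kappa>" using B by (simp add: ent_in_ball_structure)
  ultimately show "bounded_in (carrier G) (ball_structure G \<kappa>) B"
    unfolding bounded_in_def by (intro bexI[of _ "ent G B"] bexI[of _ \<one>]) simp_all
qed

lemma bornology_ball_structure:
  "bornology (carrier G) (ball_structure G \<kappa>) = {B. B \<subseteq> carrier G \<and> |B| <o \<kappa>}"
  unfolding bornology_def bounded_in_ball_structure_iff ..

lemma lin_ordered_base_ball_structure_iff_bornology:
  "lin_ordered_base (ball_structure G \<kappa>) \<longleftrightarrow> lin_ordered_base (bornology (carrier G) (ball_structure G \<kappa>))"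
proof
  assume "lin_ordered_base (ball_structure G \<kappa>)"
  then show "lin_ordered_base (bornology (carrier G) (ball_structure G \<kappa>))"
  proof (rule lin_ordered_base_image[where \<phi> = "\<lambda>E. E `` {\<one>}"])
    show "(\<lambda>E. E `` {\<one>}) ` ball_structure G \<kappa> \<subseteq> bornology (carrier G) (ball_structure G \<kappa>)"
      unfolding bornology_def bounded_in_def by auto
    show "\<exists>E\<in>ball_structure G \<kappa>. B \<subseteq> E `` {\<one>}"
      if "B \<in> bornology (carrier G) (ball_structure G \<kappa>)" for B
    proof -
      from that have B: "B \<subseteq> carrier G" "|B| <o \<kappa>" by (simp_all add: bornology_ball_structure)
      then have "B \<subseteq> ent G B `` {\<one>}" by (simp add: ent_Image_singleton subset_iff)
      then show ?thesis using ent_in_ball_structure[OF B] by blast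
    qed
  qed blast
next
  assume "lin_ordered_base (bornology (carrier G) (ball_structure G \<kappa>))"
  then show "lin_ordered_base (ball_structure G \<kappa>)"
  proof (rule lin_ordered_base_image[where \<phi> = "ent G"])
    show "ent G ` bornology (carrier G) (ball_structure G \<kappa>) \<subseteq> ball_structure G \<kappa>"
      by (auto simp: bornology_ball_structure intro: ent_in_ball_structure)
    show "\<exists>I\<in>bornology (carrier G) (ball_structure G \<kappa>). E \<subseteq> ent G I"
      if "E \<in> ball_structure G \<kappa>" for E
      using that by (auto simp: bornology_ball_structure elim: ball_structureE)
  qed (rule ent_mono)
qed

lemma bounded_in_subset:
  "bounded_in (carrier G) (ball_structure G \<kappa>) B \<Longrightarrow> A \<subseteq> B \<Longrightarrow> bounded_in (carrier G) (ball_structure G \<kappa>) A"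
  by (auto simp: bounded_in_ball_structure_iff intro: card_of_subset_ordLess)

lemma card_of_ent_Image:
  assumes "|I| <o \<kappa>" and "|S| <o \<kappa>"
  shows "|ent G I `` S| <o \<kappa>"
proof -
  have "ent G I `` S \<subseteq> (\<lambda>(i, x). i \<otimes> x) ` (insert \<one> I \<times> S)"
    using ent_Image_subset by fast
  moreover have "|insert \<one> I| <o \<kappa>"
    using Un_ordLess_kappa[OF finite_ordLess_kappa assms(1), of "{\<one>}"] by simp
  then have "|(\<lambda>(i, x). i \<otimes> x) ` (insert \<one> I \<times> S)| <o \<kappa>"
    by (intro card_of_image_ordLess Times_ordLess_kappa assms(2))
  ultimately show ?thesis by (rule card_of_subset_ordLess)
qed

lemma ent_chain_if_lin_ordered_base:
  assumes "lin_ordered_base (bornology (carrier G) (ball_structure G \<kappa>))"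
  obtains L where "\<And>F. F \<in> L \<Longrightarrow> F \<subseteq> carrier G \<and> |F| <o \<kappa>"
    and "\<And>F F'. F \<in> L \<Longrightarrow> F' \<in> L \<Longrightarrow> F \<subseteq> F' \<or> F' \<subseteq> F"
    and "\<And>E. E \<in> ball_structure G \<kappa> \<Longrightarrow> \<exists>F\<in>L. E \<subseteq> ent G F"
proof -
  obtain L where L: "L \<subseteq> bornology (carrier G) (ball_structure G \<kappa>)"
    "\<forall>A\<in>L. \<forall>B\<in>L. A \<subseteq> B \<or> B \<subseteq> A" "\<forall>A\<in>bornology (carrier G) (ball_structure G \<kappa>). \<exists>B\<in>L. A \<subseteq> B"
    using assms unfolding lin_ordered_base_def by (elim exE conjE) (rule that)
  show ?thesis
  proof (rule that[of L])
    show "F \<subseteq> carrier G \<and> |F| <o \<kappa>" if "F \<in> L" for F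
      using L(1) that by (auto simp: bornology_ball_structure)
    show "\<exists>F\<in>L. E \<subseteq> ent G F" if E: "E \<in> ball_structure G \<kappa>" for E
    proof -
      obtain I where I: "I \<subseteq> carrier G" "|I| <o \<kappa>" "E = ent G I"
        using E by (rule ball_structureE)
      then obtain F where "F \<in> L" "I \<subseteq> F" using L(3) by (auto simp: bornology_ball_structure)
      then show ?thesis using I(3) ent_mono by blast
    qed
  qed (use L(2) in blast)
qed

definition chain_separator :: "'a set set \<Rightarrow> 'a set \<Rightarrow> 'a set \<Rightarrow> 'a set"
  where "chain_separator L A B =
    {x \<in> carrier G. \<forall>F\<in>L. x \<in> ent G F `` B \<longrightarrow> x \<in> ent G F `` A}"

context
  fixes L :: "'a set set"
  assumes L_small: "\<And>F. F \<in> L \<Longrightarrow> F \<subseteq> carrier G \<and> |F| <o \<kappa>"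
    and L_chain: "\<And>F F'. F \<in> L \<Longrightarrow> F' \<in> L \<Longrightarrow> F \<subseteq> F' \<or> F' \<subseteq> F"
    and L_dominates: "\<And>E. E \<in> ball_structure G \<kappa> \<Longrightarrow> \<exists>F\<in>L. E \<subseteq> ent G F"
begin

lemma bounded_chain_meet:
  assumes "asymp_disjoint (carrier G) (ball_structure G \<kappa>) A B" and "F \<in> L"
  shows "bounded_in (carrier G) (ball_structure G \<kappa>) (ent G F `` A \<inter> ent G F `` B)"
  using assms(1) ent_in_ball_structure[OF conjunct1[OF L_small[OF assms(2)]] conjunct2[OF L_small[OF assms(2)]]]
  unfolding asymp_disjoint_def by (rule bspec)

lemma asymp_nbhd_chain_separator:
  assumes disj: "asymp_disjoint (carrier G) (ball_structure G \<kappa>) A B"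
  shows "asymp_nbhd (carrier G) (ball_structure G \<kappa>) (chain_separator L A B) A"
  unfolding asymp_nbhd_def
proof
  fix E assume "E \<in> ball_structure G \<kappa>"
  then obtain F where F: "F \<in> L" "E \<subseteq> ent G F" using L_dominates by blast
  have "E `` A - chain_separator L A B \<subseteq> ent G F `` A \<inter> ent G F `` B"
  proof
    fix x assume x: "x \<in> E `` A - chain_separator L A B"
    then have xA: "x \<in> ent G F `` A" using F(2) by blast
    then have "x \<in> carrier G" using ent_subset_carrier by blast
    with x obtain F' where F': "F' \<in> L" "x \<in> ent G F' `` B" "x \<notin> ent G F' `` A"
      unfolding chain_separator_def by blast
    have "\<not> F \<subseteq> F'" using xA F'(3) ent_mono[of F F'] by blast
    then have "F' \<subseteq> F" using L_chain[OF F(1) F'(1)] by blast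
    then have "x \<in> ent G F `` B" using F'(2) ent_mono[of F' F] by blast
    with xA show "x \<in> ent G F `` A \<inter> ent G F `` B" by blast
  qed
  then show "bounded_in (carrier G) (ball_structure G \<kappa>) (E `` A - chain_separator L A B)"
    by (rule bounded_in_subset[OF bounded_chain_meet[OF disj F(1)]])
qed

lemma asymp_nbhd_chain_separator_complement:
  assumes disj: "asymp_disjoint (carrier G) (ball_structure G \<kappa>) A B"
  shows "asymp_nbhd (carrier G) (ball_structure G \<kappa>) (carrier G - chain_separator L A B) B"
  unfolding asymp_nbhd_def
proof
  fix E assume "E \<in> ball_structure G \<kappa>"
  then obtain F where F: "F \<in> L" "E \<subseteq> ent G F" using L_dominates by blast
  have "E `` B - (carrier G - chain_separator L A B) \<subseteq> ent G F `` A \<inter> ent G F `` B"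
  proof
    fix x assume x: "x \<in> E `` B - (carrier G - chain_separator L A B)"
    then have xB: "x \<in> ent G F `` B" using F(2) by blast
    then have "x \<in> chain_separator L A B" using x ent_subset_carrier by blast
    with xB F(1) show "x \<in> ent G F `` A \<inter> ent G F `` B" unfolding chain_separator_def by blast
  qed
  then show "bounded_in (carrier G) (ball_structure G \<kappa>) (E `` B - (carrier G - chain_separator L A B))"
    by (rule bounded_in_subset[OF bounded_chain_meet[OF disj F(1)]])
qed

end

lemma normal_ballean_if_lin_ordered_base:
  assumes "lin_ordered_base (bornology (carrier G) (ball_structure G \<kappa>))"
  shows "normal_ballean (carrier G) (ball_structure G \<kappa>)"
proof -
  obtain L where L: "\<And>F. F \<in> L \<Longrightarrow> F \<subseteq> carrier G \<and> |F| <o \<kappa>"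
    "\<And>F F'. F \<in> L \<Longrightarrow> F' \<in> L \<Longrightarrow> F \<subseteq> F' \<or> F' \<subseteq> F"
    "\<And>E. E \<in> ball_structure G \<kappa> \<Longrightarrow> \<exists>F\<in>L. E \<subseteq> ent G F"
    by (erule ent_chain_if_lin_ordered_base[OF assms])
  show ?thesis unfolding normal_ballean_def
  proof (intro allI impI)
    fix A B assume "asymp_disjoint (carrier G) (ball_structure G \<kappa>) A B"
    note separator = asymp_nbhd_chain_separator[OF L this]
      asymp_nbhd_chain_separator_complement[OF L this]
    show "\<exists>U V. U \<subseteq> carrier G \<and> V \<subseteq> carrier G \<and> asymp_nbhd (carrier G) (ball_structure G \<kappa>) U A
        \<and> asymp_nbhd (carrier G) (ball_structure G \<kappa>) V B \<and> U \<inter> V = {}"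
      by (rule exI[of _ "chain_separator L A B"], rule exI[of _ "carrier G - chain_separator L A B"],
          intro conjI separator) (auto simp: chain_separator_def)
  qed
qed

context
  fixes C :: "'b \<Rightarrow> 'a set" and s :: "'a \<Rightarrow> 'b"
  assumes C_small: "\<And>a. a \<in> Field \<kappa> \<Longrightarrow> C a \<subseteq> carrier G \<and> |C a| <o \<kappa>"
    and C_chain: "\<And>a b. a \<in> Field \<kappa> \<Longrightarrow> b \<in> Field \<kappa> \<Longrightarrow> C a \<subseteq> C b \<or> C b \<subseteq> C a"
    and C_cover: "\<And>S. S \<subseteq> carrier G \<Longrightarrow> |S| <o \<kappa> \<Longrightarrow> \<exists>a\<in>Field \<kappa>. S \<subseteq> C a"
    and stage: "\<And>x. x \<in> carrier G \<Longrightarrow> s x \<in> Field \<kappa> \<and> x \<in> C (s x)"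
    and stage_least: "\<And>x b. b \<in> Field \<kappa> \<Longrightarrow> x \<in> C b \<Longrightarrow> C (s x) \<subseteq> C b"
begin

lemma lin_ordered_base_bornology_if_chain: "lin_ordered_base (bornology (carrier G) (ball_structure G \<kappa>))"
  unfolding lin_ordered_base_def bornology_ball_structure
proof (intro exI[of _ "C ` Field \<kappa>"] conjI ballI)
  show "C ` Field \<kappa> \<subseteq> {B. B \<subseteq> carrier G \<and> |B| <o \<kappa>}" using C_small by blast
qed (use C_chain C_cover in auto)

definition stage_entourage :: "('a \<times> 'a) set"
  where "stage_entourage = {(x, y). x \<in> carrier G \<and> (x, y) \<in> ent G (C (s x))}"

lemma stage_entourage_Image_bounded:
  assumes "bounded_in (carrier G) (ball_structure G \<kappa>) B"
  shows "bounded_in (carrier G) (ball_structure G \<kappa>) (stage_entourage `` B)"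
proof -
  have B: "B \<subseteq> carrier G" "|B| <o \<kappa>" using assms by (simp_all add: bounded_in_ball_structure_iff)
  then obtain a where a: "a \<in> Field \<kappa>" "B \<subseteq> C a" using C_cover by blast
  have "stage_entourage `` B \<subseteq> ent G (C a) `` C a"
  proof
    fix y assume "y \<in> stage_entourage `` B"
    then obtain x where x: "x \<in> B" "(x, y) \<in> ent G (C (s x))" unfolding stage_entourage_def by blast
    have "C (s x) \<subseteq> C a" using stage_least a x(1) by blast
    then show "y \<in> ent G (C a) `` C a" using x a(2) ent_mono by blast
  qed
  moreover have "|ent G (C a) `` C a| <o \<kappa>" using C_small[OF a(1)] by (simp add: card_of_ent_Image)
  ultimately show ?thesis
    using ent_subset_carrier by (auto simp: bounded_in_ball_structure_iff intro: card_of_subset_ordLess)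
qed

lemma stage_entourage_eventually:
  assumes "E \<in> ball_structure G \<kappa>"
  shows "\<exists>B. bounded_in (carrier G) (ball_structure G \<kappa>) B \<and>
    (\<forall>x\<in>carrier G - B. E `` {x} \<subseteq> stage_entourage `` {x})"
proof -
  obtain I where I: "I \<subseteq> carrier G" "|I| <o \<kappa>" "E = ent G I" using assms by (rule ball_structureE)
  then obtain a where a: "a \<in> Field \<kappa>" "I \<subseteq> C a" using C_cover by blast
  have "E `` {x} \<subseteq> stage_entourage `` {x}" if x: "x \<in> carrier G - C a" for x
  proof -
    have "x \<in> C (s x)" "s x \<in> Field \<kappa>" using stage x by simp_all
    then have "C a \<subseteq> C (s x)" using C_chain[OF a(1) \<open>s x \<in> Field \<kappa>\<close>] x by blast
    then show ?thesis
      using I(3) a(2) x ent_mono[of I "C (s x)"] unfolding stage_entourage_def by auto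
  qed
  then show ?thesis using C_small[OF a(1)] by (auto simp: bounded_in_ball_structure_iff)
qed

lemma bounded_growth_if_chain: "bounded_growth (carrier G) (ball_structure G \<kappa>)"
  unfolding bounded_growth_def
proof (intro exI[of _ stage_entourage] conjI allI impI ballI)
  show "stage_entourage \<subseteq> carrier G \<times> carrier G"
    using ent_subset_carrier unfolding stage_entourage_def by blast
qed (simp_all add: stage_entourage_Image_bounded stage_entourage_eventually)

end

lemma lin_ordered_base_bornology_and_bounded_growth_if_regularCard:
  assumes "|carrier G| =o \<kappa>" and "regularCard \<kappa>"
  shows "lin_ordered_base (bornology (carrier G) (ball_structure G \<kappa>))
    \<and> bounded_growth (carrier G) (ball_structure G \<kappa>)"
proof -
  obtain C s where "\<And>a. a \<in> Field \<kappa> \<Longrightarrow> C a \<subseteq> carrier G \<and> |C a| <o \<kappa>"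
    and "\<And>a b. a \<in> Field \<kappa> \<Longrightarrow> b \<in> Field \<kappa> \<Longrightarrow> C a \<subseteq> C b \<or> C b \<subseteq> C a"
    and "\<And>S. S \<subseteq> carrier G \<Longrightarrow> |S| <o \<kappa> \<Longrightarrow> \<exists>a\<in>Field \<kappa>. S \<subseteq> C a"
    and "\<And>x. x \<in> carrier G \<Longrightarrow> s x \<in> Field \<kappa> \<and> x \<in> C (s x)"
    and "\<And>x b. b \<in> Field \<kappa> \<Longrightarrow> x \<in> C b \<Longrightarrow> C (s x) \<subseteq> C b"
    by (erule regularCard_chain_cover[OF Card_order_kappa infinite_kappa assms])
  from lin_ordered_base_bornology_if_chain[OF this] bounded_growth_if_chain[OF this]
  show ?thesis ..
qed

lemma infinite_carrier: "\<kappa> \<le>o |carrier G| \<Longrightarrow> infinite (carrier G)"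
  using card_of_ordLeq_infinite[OF ordIso_ordLeq_trans[OF card_of_Field_ordIso[OF Card_order_kappa]]]
    infinite_kappa by blast

text \<open>Square-split witness: \<open>(c, r)\<close> is marked when the growth function already
  covers the translate \<open>r c\<close> of \<open>c\<close>.\<close>

lemma card_of_ordIso_regularCard_if_bounded_growth:
  assumes le: "\<kappa> \<le>o |carrier G|" and bg: "bounded_growth (carrier G) (ball_structure G \<kappa>)"
  shows "|carrier G| =o \<kappa> \<and> regularCard \<kappa>"
proof -
  obtain \<Gamma> where \<Gamma>_bounded: "\<And>B. bounded_in (carrier G) (ball_structure G \<kappa>) B \<Longrightarrow>
      bounded_in (carrier G) (ball_structure G \<kappa>) (\<Gamma> `` B)"
    and \<Gamma>_eventually: "\<And>E. E \<in> ball_structure G \<kappa> \<Longrightarrow> \<exists>B. bounded_in (carrier G) (ball_structure G \<kappa>) B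
      \<and> (\<forall>x\<in>carrier G - B. E `` {x} \<subseteq> \<Gamma> `` {x})"
    using bg unfolding bounded_growth_def by blast
  define W where "W = {(c, r). r \<otimes> c \<in> \<Gamma> `` {c}}"
  have rows: "|carrier G \<times> R - W| <o \<kappa>" if R: "R \<subseteq> carrier G" "|R| <o \<kappa>" for R
  proof -
    obtain B where B: "bounded_in (carrier G) (ball_structure G \<kappa>) B"
      and cover: "\<forall>x\<in>carrier G - B. ent G R `` {x} \<subseteq> \<Gamma> `` {x}"
      using \<Gamma>_eventually[OF ent_in_ball_structure[OF R]] by blast
    have "carrier G \<times> R - W \<subseteq> B \<times> R"
      using cover R(1) mult_mem_ent_Image[of _ R _ "{_}"] unfolding W_def by blast
    moreover have "|B \<times> R| <o \<kappa>"
      using B R(2) by (simp add: bounded_in_ball_structure_iff Times_ordLess_kappa)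
    ultimately show ?thesis by (rule card_of_subset_ordLess)
  qed
  have cols: "|C \<times> carrier G \<inter> W| <o \<kappa>" if C: "C \<subseteq> carrier G" "|C| <o \<kappa>" for C
  proof -
    have "|\<Gamma> `` C| <o \<kappa>"
      using \<Gamma>_bounded[of C] C by (simp add: bounded_in_ball_structure_iff)
    have "C \<times> carrier G \<inter> W \<subseteq> (\<lambda>(c, y). (c, y \<otimes> inv c)) ` (C \<times> \<Gamma> `` C)"
    proof clarify
      fix c r assume "c \<in> C" "r \<in> carrier G" "(c, r) \<in> W"
      moreover have "r = (r \<otimes> c) \<otimes> inv c" using \<open>c \<in> C\<close> \<open>r \<in> carrier G\<close> C(1)
        by (simp add: m_assoc subsetD)
      ultimately show "(c, r) \<in> (\<lambda>(c, y). (c, y \<otimes> inv c)) ` (C \<times> \<Gamma> `` C)"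
        unfolding W_def by (intro image_eqI[of _ _ "(c, r \<otimes> c)"]) auto
    qed
    moreover have "|(\<lambda>(c, y). (c, y \<otimes> inv c)) ` (C \<times> \<Gamma> `` C)| <o \<kappa>"
      by (intro card_of_image_ordLess Times_ordLess_kappa C(2) \<open>|\<Gamma> `` C| <o \<kappa>\<close>)
    ultimately show ?thesis by (rule card_of_subset_ordLess)
  qed
  show ?thesis
    by (rule card_of_ordIso_regularCard_if_square_split[OF Card_order_kappa infinite_kappa le])
      (unfold square_split_def, use rows cols in blast)
qed

text \<open>If \<open>i a = j b\<close> then \<open>a b\<inverse> = i\<inverse> j\<close>, so a small entourage can only join
  \<open>A\<close> and \<open>B\<close> along the few pairs whose quotient lies in a small set.\<close>

lemma asymp_disjoint_if_few_quotients:
  assumes A: "A \<subseteq> carrier G" and B: "B \<subseteq> carrier G"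
    and few: "\<And>D. D \<subseteq> carrier G \<Longrightarrow> |D| <o \<kappa> \<Longrightarrow> |{(a, b) \<in> A \<times> B. a \<otimes> inv b \<in> D}| <o \<kappa>"
  shows "asymp_disjoint (carrier G) (ball_structure G \<kappa>) A B"
  unfolding asymp_disjoint_def
proof
  fix E assume "E \<in> ball_structure G \<kappa>"
  then obtain I where I: "I \<subseteq> carrier G" "|I| <o \<kappa>" "E = ent G I" by (rule ball_structureE)
  define J where "J = insert \<one> I"
  define D where "D = (\<lambda>(i, j). inv i \<otimes> j) ` (J \<times> J)"
  have J: "J \<subseteq> carrier G" "|J| <o \<kappa>"
    using I Un_ordLess_kappa[OF finite_ordLess_kappa I(2), of "{\<one>}"] by (simp_all add: J_def)
  have D: "D \<subseteq> carrier G" "|D| <o \<kappa>"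
    using J unfolding D_def by (auto intro!: card_of_image_ordLess Times_ordLess_kappa)
  have "E `` A \<inter> E `` B \<subseteq> (\<lambda>(i, (a, b)). i \<otimes> a) ` (J \<times> {(a, b) \<in> A \<times> B. a \<otimes> inv b \<in> D})"
  proof
    fix w assume "w \<in> E `` A \<inter> E `` B"
    then have wA: "w \<in> ent G I `` A" and wB: "w \<in> ent G I `` B" using I(3) by simp_all
    have "w \<in> {i \<otimes> x | i x. i \<in> J \<and> x \<in> A \<and> x \<in> carrier G}"
      unfolding J_def by (rule subsetD[OF ent_Image_subset wA])
    moreover have "w \<in> {i \<otimes> x | i x. i \<in> J \<and> x \<in> B \<and> x \<in> carrier G}"
      unfolding J_def by (rule subsetD[OF ent_Image_subset wB])
    ultimately obtain i a j b where ia: "i \<in> J" "a \<in> A" "w = i \<otimes> a" and jb: "j \<in> J" "b \<in> B" "w = j \<otimes> b"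
      by blast
    then have "a \<otimes> inv b = inv i \<otimes> j"
      using A B J(1) by (intro quotient_eq_if_mult_eq) auto
    then have "(a, b) \<in> {(a, b) \<in> A \<times> B. a \<otimes> inv b \<in> D}"
      using ia(1,2) jb(1,2) unfolding D_def by auto
    then show "w \<in> (\<lambda>(i, (a, b)). i \<otimes> a) ` (J \<times> {(a, b) \<in> A \<times> B. a \<otimes> inv b \<in> D})"
      using ia by (intro image_eqI[of _ _ "(i, (a, b))"]) auto
  qed
  moreover have "|(\<lambda>(i, (a, b)). i \<otimes> a) ` (J \<times> {(a, b) \<in> A \<times> B. a \<otimes> inv b \<in> D})| <o \<kappa>"
    by (intro card_of_image_ordLess Times_ordLess_kappa J(2) few D)
  ultimately show "bounded_in (carrier G) (ball_structure G \<kappa>) (E `` A \<inter> E `` B)"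
    using ent_subset_carrier I(3)
    by (auto simp: bounded_in_ball_structure_iff intro: card_of_subset_ordLess)
qed

lemma card_of_grid_quotients_ordLess:
  assumes tagged: "inj_on (\<lambda>(p, q). (grid_quotient k h z p q, grid_tag p q)) (cells \<times> cells)"
    and D: "|D| <o \<kappa>"
  shows "|{(a, b) \<in> row_part k z ` cells \<times> col_part h z ` cells. a \<otimes> inv b \<in> D}| <o \<kappa>"
proof -
  define bad where "bad = {(p, q) \<in> cells \<times> cells. grid_quotient k h z p q \<in> D}"
  have "inj_on (\<lambda>(p, q). (grid_quotient k h z p q, grid_tag p q)) bad"
    by (rule inj_on_subset[OF tagged]) (auto simp: bad_def)
  moreover have "(\<lambda>(p, q). (grid_quotient k h z p q, grid_tag p q)) ` bad \<subseteq> D \<times> {..<3}"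
    by (auto simp: bad_def grid_tag_def)
  ultimately have bad: "|bad| <o \<kappa>"
    by (rule card_of_inj_on_ordLess[OF _ _ Times_ordLess_kappa[OF D finite_ordLess_kappa]]) simp
  have "{(a, b) \<in> row_part k z ` cells \<times> col_part h z ` cells. a \<otimes> inv b \<in> D}
      \<subseteq> (\<lambda>(p, q). (row_part k z p, col_part h z q)) ` bad"
  proof
    fix x assume "x \<in> {(a, b) \<in> row_part k z ` cells \<times> col_part h z ` cells. a \<otimes> inv b \<in> D}"
    then obtain p q where "p \<in> cells" "q \<in> cells" "x = (row_part k z p, col_part h z q)"
      and "row_part k z p \<otimes> inv (col_part h z q) \<in> D" by blast
    then show "x \<in> (\<lambda>(p, q). (row_part k z p, col_part h z q)) ` bad"
      unfolding bad_def grid_quotient_def by (intro image_eqI[of _ _ "(p, q)"]) auto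
  qed
  then show ?thesis by (rule card_of_subset_ordLess[OF _ card_of_image_ordLess[OF bad]])
qed

lemma exists_asymp_disjoint_grid:
  assumes "infinite (carrier G)"
  obtains A B z k h where "A \<subseteq> carrier G" and "B \<subseteq> carrier G"
    and "asymp_disjoint (carrier G) (ball_structure G \<kappa>) A B" and "inj_on z cells"
    and "\<And>c r. c \<in> carrier G \<Longrightarrow> r \<in> carrier G \<Longrightarrow>
      k r \<in> carrier G \<and> h c \<in> carrier G \<and> z (c, r) \<in> (k r <# A) \<inter> (h c <# B)"
proof -
  obtain k h z where k: "k \<in> carrier G \<rightarrow> carrier G" and h: "h \<in> carrier G \<rightarrow> carrier G"
    and z: "z \<in> cells \<rightarrow> carrier G" and z_inj: "inj_on z cells"
    and tagged: "inj_on (\<lambda>(p, q). (grid_quotient k h z p q, grid_tag p q)) (cells \<times> cells)"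
    by (erule exists_grid[OF assms])
  have closed: "k (snd p) \<in> carrier G" "h (fst p) \<in> carrier G" "z p \<in> carrier G"
    "row_part k z p \<in> carrier G" "col_part h z p \<in> carrier G" if p: "p \<in> cells" for p
  proof -
    show kp: "k (snd p) \<in> carrier G" and hp: "h (fst p) \<in> carrier G" and zp: "z p \<in> carrier G"
      using p k h z by auto
    show "row_part k z p \<in> carrier G" "col_part h z p \<in> carrier G"
      using kp hp zp by (simp_all add: row_part_def col_part_def)
  qed
  define A where "A = row_part k z ` cells"
  define B where "B = col_part h z ` cells"
  have few: "|{(a, b) \<in> A \<times> B. a \<otimes> inv b \<in> D}| <o \<kappa>" if "|D| <o \<kappa>" for D
    unfolding A_def B_def by (rule card_of_grid_quotients_ordLess[OF tagged that])
  show ?thesis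
  proof (rule that[of A B z k h])
    show "A \<subseteq> carrier G" "B \<subseteq> carrier G" using closed by (auto simp: A_def B_def)
    then show "asymp_disjoint (carrier G) (ball_structure G \<kappa>) A B"
      using few by (rule asymp_disjoint_if_few_quotients)
    show "k r \<in> carrier G \<and> h c \<in> carrier G \<and> z (c, r) \<in> (k r <# A) \<inter> (h c <# B)"
      if "c \<in> carrier G" "r \<in> carrier G" for c r
    proof -
      have p: "(c, r) \<in> cells" using that by simp
      have row: "z (c, r) = k r \<otimes> row_part k z (c, r)" and col: "z (c, r) = h c \<otimes> col_part h z (c, r)"
        using closed[OF p] by (simp_all add: row_part_def col_part_def group_cancel_simps)
      have "z (c, r) \<in> k r <# A" unfolding l_coset_def A_def
        by (rule UN_I[of "row_part k z (c, r)"]) (use p row in auto)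
      moreover have "z (c, r) \<in> h c <# B" unfolding l_coset_def B_def
        by (rule UN_I[of "col_part h z (c, r)"]) (use p col in auto)
      ultimately show ?thesis using closed[OF p] by simp
    qed
  qed (rule z_inj)
qed

text \<open>Square-split witness: the point \<open>z (c, r)\<close> of the grid is marked when it lies in
  the neighbourhood of \<open>A\<close>; rows stay near \<open>A\<close> and columns near \<open>B\<close>.\<close>

lemma card_of_ordIso_regularCard_if_normal:
  assumes le: "\<kappa> \<le>o |carrier G|" and normal: "normal_ballean (carrier G) (ball_structure G \<kappa>)"
  shows "|carrier G| =o \<kappa> \<and> regularCard \<kappa>"
proof -
  obtain A B z k h where A: "A \<subseteq> carrier G" and B: "B \<subseteq> carrier G"
    and disj: "asymp_disjoint (carrier G) (ball_structure G \<kappa>) A B" and z_inj: "inj_on z cells"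
    and grid: "\<And>c r. c \<in> carrier G \<Longrightarrow> r \<in> carrier G \<Longrightarrow>
      k r \<in> carrier G \<and> h c \<in> carrier G \<and> z (c, r) \<in> (k r <# A) \<inter> (h c <# B)"
    by (erule exists_asymp_disjoint_grid[OF infinite_carrier[OF le]])
  from normal[unfolded normal_ballean_def, rule_format, OF A B disj]
  obtain U V where U: "asymp_nbhd (carrier G) (ball_structure G \<kappa>) U A"
    and V: "asymp_nbhd (carrier G) (ball_structure G \<kappa>) V B" and UV: "U \<inter> V = {}"
    by blast
  have outside_small: "|ent G K `` S - N| <o \<kappa>"
    if "asymp_nbhd (carrier G) (ball_structure G \<kappa>) N S" "K \<subseteq> carrier G" "|K| <o \<kappa>" for K S N
    using that ent_in_ball_structure
    by (auto simp: asymp_nbhd_def bounded_in_ball_structure_iff)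
  define W where "W = {p. z p \<in> U}"
  have rows: "|carrier G \<times> R - W| <o \<kappa>" if R: "R \<subseteq> carrier G" "|R| <o \<kappa>" for R
  proof -
    have kR: "k ` R \<subseteq> carrier G" using grid R(1) by blast
    have "inj_on z (carrier G \<times> R - W)" by (rule inj_on_subset[OF z_inj]) (use R(1) in blast)
    moreover have "z ` (carrier G \<times> R - W) \<subseteq> ent G (k ` R) `` A - U"
      using grid R(1) l_coset_subset_ent_Image[OF _ kR A] unfolding W_def by blast
    ultimately show ?thesis
      by (rule card_of_inj_on_ordLess[OF _ _ outside_small[OF U kR card_of_image_ordLess[OF R(2)]]])
  qed
  have cols: "|C \<times> carrier G \<inter> W| <o \<kappa>" if C: "C \<subseteq> carrier G" "|C| <o \<kappa>" for C
  proof -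
    have hC: "h ` C \<subseteq> carrier G" using grid C(1) by blast
    have "inj_on z (C \<times> carrier G \<inter> W)" by (rule inj_on_subset[OF z_inj]) (use C(1) in blast)
    moreover have "z ` (C \<times> carrier G \<inter> W) \<subseteq> ent G (h ` C) `` B - V"
      using grid C(1) UV l_coset_subset_ent_Image[OF _ hC B] unfolding W_def by blast
    ultimately show ?thesis
      by (rule card_of_inj_on_ordLess[OF _ _ outside_small[OF V hC card_of_image_ordLess[OF C(2)]]])
  qed
  show ?thesis
    by (rule card_of_ordIso_regularCard_if_square_split[OF Card_order_kappa infinite_kappa le])
      (unfold square_split_def, use rows cols in blast)
qed

end

theorem theorem1p18:
  fixes G :: "('a, 'm) monoid_scheme" and \<kappa> :: "'b rel"
  assumes "group G"
    and "Card_order \<kappa>" and "\<not> finite (Field \<kappa>)"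
    and "\<kappa> \<le>o |carrier G|"
  shows "(lin_ordered_base (ball_structure G \<kappa>)
            \<longleftrightarrow> lin_ordered_base (bornology (carrier G) (ball_structure G \<kappa>)))
       \<and> (lin_ordered_base (bornology (carrier G) (ball_structure G \<kappa>))
            \<longleftrightarrow> bounded_growth (carrier G) (ball_structure G \<kappa>))
       \<and> (bounded_growth (carrier G) (ball_structure G \<kappa>)
            \<longleftrightarrow> ( |carrier G| =o \<kappa> \<and> regularCard \<kappa>))
       \<and> ((regularCard \<kappa> \<or> solvable G) \<longrightarrow>
            (( |carrier G| =o \<kappa> \<and> regularCard \<kappa>) \<longleftrightarrow> normal_ballean (carrier G) (ball_structure G \<kappa>)))"
proof -
  interpret group_ballean G \<kappa>
    using assms(1-3) by (simp add: group_ballean_def group_ballean_axioms_def)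
  let ?lin = "lin_ordered_base (bornology (carrier G) (ball_structure G \<kappa>))"
  let ?growth = "bounded_growth (carrier G) (ball_structure G \<kappa>)"
  let ?normal = "normal_ballean (carrier G) (ball_structure G \<kappa>)"
  let ?regular = "|carrier G| =o \<kappa> \<and> regularCard \<kappa>"
  have "?lin \<Longrightarrow> ?normal" by (rule normal_ballean_if_lin_ordered_base)
  moreover have "?normal \<Longrightarrow> ?regular" by (rule card_of_ordIso_regularCard_if_normal[OF assms(4)])
  moreover have "?regular \<Longrightarrow> ?lin \<and> ?growth"
    by (simp add: lin_ordered_base_bornology_and_bounded_growth_if_regularCard)
  moreover have "?growth \<Longrightarrow> ?regular"
    by (rule card_of_ordIso_regularCard_if_bounded_growth[OF assms(4)])
  ultimately show ?thesis using lin_ordered_base_ball_structure_iff_bornology by blast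
qed

end
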